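(* Let $H$ be a weak Hopf algebra, $A$ an algebra and $\pi\colon H\to A$ a linear map satisfying (PR1)–(PR5). Then the following are equivalent: (1) $\pi(h)=\pi(h_1)\pi(S(h_2))\pi(h_3)$ for all $h\in H$; (2) $\pi(1_1)\pi(S(1_2))=1_A$; (3) $\pi(S(1_1))\pi(1_2)=1_A$; (4) $\pi(S(h))=\pi(S(h_1))\pi(h_2)\pi(S(h_3))$ for all $h\in H$. Moreover, if the antipode $S$ is invertible, these are also equivalent to each of: (5) $\pi(h)=\pi(h_3)\pi(S^{-1}(h_2))\pi(h_1)$ for all $h\in H$; (6) $\pi(S^{-1}(1_2))\pi(1_1)=1_A$; (7) $\pi(1_2)\pi(S^{-1}(1_1))=1_A$.
   Context: All algebras are associative and unital over a field $\Bbbk$; Sweedler notation $\Delta(h)=h_1\otimes h_2$, $\Delta(1_H)=1_1\otimes1_2$. A weak Hopf algebra is $(H,m,u,\Delta,\varepsilon,S)$ with $H$ an algebra, $(H,\Delta,\varepsilon)$ a coalgebra, and for all $g,h,k$: $\Delta(kh)=\Delta(k)\Delta(h)$; $\varepsilon(kh_1)\varepsilon(h_2g)=\varepsilon(khg)=\varepsilon(kh_2)\varepsilon(h_1g)$; $(1\otimes\Delta(1))(\Delta(1)\otimes1)=\Delta^2(1)=(\Delta(1)\otimes1)(1\otimes\Delta(1))$; $h_1S(h_2)=\varepsilon(1_1h)1_2$; $S(h_1)h_2=1_1\varepsilon(h1_2)$; $S(h)=S(h_1)h_2S(h_3)$. Conditions, for all $h,k\in H$: (PR1) $\pi(1_H)=1_A$;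 (PR2) $\pi(h)\pi(k_1)\pi(S(k_2))=\pi(hk_1)\pi(S(k_2))$; (PR3) $\pi(h)\pi(S(k_1))\pi(k_2)=\pi(hS(k_1))\pi(k_2)$; (PR4) $\pi(h_1)\pi(S(h_2))\pi(k)=\pi(h_1)\pi(S(h_2)k)$; (PR5) $\pi(S(h_1))\pi(h_2)\pi(k)=\pi(S(h_1))\pi(h_2k)$. *)

theory Defs
  imports Complex_Main
begin

definition k_algebra :: "('k::field \<Rightarrow> 'h::ring_1 \<Rightarrow> 'h) \<Rightarrow> bool" where
  "k_algebra s \<longleftrightarrow> Vector_Spaces.vector_space s \<and>
     (\<forall>c x y. s c (x * y) = s c x * y \<and> s c (x * y) = x * s c y)"

text \<open>Formal k-linear combinations on a set X are finitely supported functions X to k.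
  A list of elements of X denotes the formal sum of its entries.\<close>
definition fsum :: "'x list \<Rightarrow> 'x \<Rightarrow> 'k::field" where
  "fsum xs = (\<lambda>q. of_nat (count_list xs q))"

definition delta :: "'x \<Rightarrow> 'x \<Rightarrow> 'k::field" where
  "delta p = (\<lambda>q. if q = p then 1 else 0)"

inductive in_kspan :: "(('x \<Rightarrow> 'k::field) \<Rightarrow> bool) \<Rightarrow> ('x \<Rightarrow> 'k) \<Rightarrow> bool"
  for G where
  zero: "in_kspan G (\<lambda>q. 0)"
| gen: "G g \<Longrightarrow> in_kspan G g"
| add: "in_kspan G f \<Longrightarrow> in_kspan G g \<Longrightarrow> in_kspan G (\<lambda>q. f q + g q)"
| smult: "in_kspan G f \<Longrightarrow> in_kspan G (\<lambda>q. c * f q)"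

definition bilin_rels :: "('k::field \<Rightarrow> 'h::ab_group_add \<Rightarrow> 'h) \<Rightarrow> ('h \<times> 'h \<Rightarrow> 'k) \<Rightarrow> bool" where
  "bilin_rels s g \<longleftrightarrow>
     (\<exists>a a' b. g = (\<lambda>q. delta (a + a', b) q - delta (a, b) q - delta (a', b) q)) \<or>
     (\<exists>a b b'. g = (\<lambda>q. delta (a, b + b') q - delta (a, b) q - delta (a, b') q)) \<or>
     (\<exists>c a b. g = (\<lambda>q. delta (s c a, b) q - c * delta (a, b) q)) \<or>
     (\<exists>c a b. g = (\<lambda>q. delta (a, s c b) q - c * delta (a, b) q))"

definition trilin_rels :: "('k::field \<Rightarrow> 'h::ab_group_add \<Rightarrow> 'h) \<Rightarrow> ('h \<times> 'h \<times> 'h \<Rightarrow> 'k) \<Rightarrow> bool" where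
  "trilin_rels s g \<longleftrightarrow>
     (\<exists>a a' b d. g = (\<lambda>q. delta (a + a', b, d) q - delta (a, b, d) q - delta (a', b, d) q)) \<or>
     (\<exists>a b b' d. g = (\<lambda>q. delta (a, b + b', d) q - delta (a, b, d) q - delta (a, b', d) q)) \<or>
     (\<exists>a b d d'. g = (\<lambda>q. delta (a, b, d + d') q - delta (a, b, d) q - delta (a, b, d') q)) \<or>
     (\<exists>c a b d. g = (\<lambda>q. delta (s c a, b, d) q - c * delta (a, b, d) q)) \<or>
     (\<exists>c a b d. g = (\<lambda>q. delta (a, s c b, d) q - c * delta (a, b, d) q)) \<or>
     (\<exists>c a b d. g = (\<lambda>q. delta (a, b, s c d) q - c * delta (a, b, d) q))"

text \<open>A list [(a1,b1),...,(an,bn)] represents the tensor a1(x)b1 + ... + an(x)bn;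
  two lists represent the same element of H (x) H iff the difference of their formal
  sums lies in the span of the bilinearity relations.\<close>
definition tensor2_eq :: "('k::field \<Rightarrow> 'h::ab_group_add \<Rightarrow> 'h) \<Rightarrow> ('h \<times> 'h) list \<Rightarrow> ('h \<times> 'h) list \<Rightarrow> bool" where
  "tensor2_eq s xs ys \<longleftrightarrow> in_kspan (bilin_rels s) (\<lambda>q. (fsum xs q :: 'k) - fsum ys q)"

definition tensor3_eq :: "('k::field \<Rightarrow> 'h::ab_group_add \<Rightarrow> 'h) \<Rightarrow> ('h \<times> 'h \<times> 'h) list \<Rightarrow> ('h \<times> 'h \<times> 'h) list \<Rightarrow> bool" where
  "tensor3_eq s xs ys \<longleftrightarrow> in_kspan (trilin_rels s) (\<lambda>q. (fsum xs q :: 'k) - fsum ys q)"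

text \<open>The comultiplication is given by a function D choosing, for each h, a representative
  list of Delta(h) = h_1 (x) h_2.  Delta^2(h) = h_1 (x) h_2 (x) h_3 := (Delta (x) id) Delta(h).\<close>
definition comult2 :: "('h \<Rightarrow> ('h \<times> 'h) list) \<Rightarrow> 'h \<Rightarrow> ('h \<times> 'h \<times> 'h) list" where
  "comult2 D h = concat (map (\<lambda>(x, y). map (\<lambda>(a, b). (a, b, y)) (D x)) (D h))"

definition comult2' :: "('h \<Rightarrow> ('h \<times> 'h) list) \<Rightarrow> 'h \<Rightarrow> ('h \<times> 'h \<times> 'h) list" where
  "comult2' D h = concat (map (\<lambda>(x, y). map (\<lambda>(a, b). (x, a, b)) (D y)) (D h))"

definition tmult2 :: "('h::times \<times> 'h) list \<Rightarrow> ('h \<times> 'h) list \<Rightarrow> ('h \<times> 'h) list" where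
  "tmult2 xs ys = concat (map (\<lambda>(a, b). map (\<lambda>(c, d). (a * c, b * d)) ys) xs)"

definition tmult3 :: "('h::times \<times> 'h \<times> 'h) list \<Rightarrow> ('h \<times> 'h \<times> 'h) list \<Rightarrow> ('h \<times> 'h \<times> 'h) list" where
  "tmult3 xs ys = concat (map (\<lambda>(a, b, c). map (\<lambda>(a', b', c'). (a * a', b * b', c * c')) ys) xs)"

definition weak_hopf_algebra ::
  "('k::field \<Rightarrow> 'h::ring_1 \<Rightarrow> 'h) \<Rightarrow> ('h \<Rightarrow> ('h \<times> 'h) list) \<Rightarrow> ('h \<Rightarrow> 'k) \<Rightarrow> ('h \<Rightarrow> 'h) \<Rightarrow> bool" where
  "weak_hopf_algebra s D \<epsilon> S \<longleftrightarrow>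
     k_algebra s \<and>
     \<comment> \<open>coalgebra: Delta linear, coassociative, counital\<close>
     (\<forall>c x y. tensor2_eq s (D (s c x + y)) (map (\<lambda>(a, b). (s c a, b)) (D x) @ D y)) \<and>
     Vector_Spaces.linear s (*) \<epsilon> \<and>
     (\<forall>h. tensor3_eq s (comult2 D h) (comult2' D h)) \<and>
     (\<forall>h. sum_list (map (\<lambda>(x, y). s (\<epsilon> x) y) (D h)) = h) \<and>
     (\<forall>h. sum_list (map (\<lambda>(x, y). s (\<epsilon> y) x) (D h)) = h) \<and>
     \<comment> \<open>antipode linear\<close>
     Vector_Spaces.linear s s S \<and>
     \<comment> \<open>Delta(kh) = Delta(k) Delta(h)\<close>
     (\<forall>k h. tensor2_eq s (D (k * h)) (tmult2 (D k) (D h))) \<and>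
     \<comment> \<open>weak multiplicativity of the counit\<close>
     (\<forall>k h g. sum_list (map (\<lambda>(x, y). \<epsilon> (k * x) * \<epsilon> (y * g)) (D h)) = \<epsilon> (k * h * g)) \<and>
     (\<forall>k h g. sum_list (map (\<lambda>(x, y). \<epsilon> (k * y) * \<epsilon> (x * g)) (D h)) = \<epsilon> (k * h * g)) \<and>
     \<comment> \<open>weak comultiplicativity of the unit\<close>
     tensor3_eq s (tmult3 (map (\<lambda>(a, b). (1, a, b)) (D 1)) (map (\<lambda>(a, b). (a, b, 1)) (D 1)))
                  (comult2 D 1) \<and>
     tensor3_eq s (tmult3 (map (\<lambda>(a, b). (a, b, 1)) (D 1)) (map (\<lambda>(a, b). (1, a, b)) (D 1)))
                  (comult2 D 1) \<and>
     \<comment> \<open>antipode axioms\<close>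
     (\<forall>h. sum_list (map (\<lambda>(x, y). x * S y) (D h))
            = sum_list (map (\<lambda>(a, b). s (\<epsilon> (a * h)) b) (D 1))) \<and>
     (\<forall>h. sum_list (map (\<lambda>(x, y). S x * y) (D h))
            = sum_list (map (\<lambda>(a, b). s (\<epsilon> (h * b)) a) (D 1))) \<and>
     (\<forall>h. S h = sum_list (map (\<lambda>(x, y, z). S x * y * S z) (comult2 D h)))"

definition PR_conditions ::
  "('h::ring_1 \<Rightarrow> ('h \<times> 'h) list) \<Rightarrow> ('h \<Rightarrow> 'h) \<Rightarrow> ('h \<Rightarrow> 'a::ring_1) \<Rightarrow> bool" where
  "PR_conditions D S \<pi> \<longleftrightarrow>
     \<pi> 1 = 1 \<and>
     (\<forall>h k. sum_list (map (\<lambda>(x, y). \<pi> h * \<pi> x * \<pi> (S y)) (D k))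
          = sum_list (map (\<lambda>(x, y). \<pi> (h * x) * \<pi> (S y)) (D k))) \<and>
     (\<forall>h k. sum_list (map (\<lambda>(x, y). \<pi> h * \<pi> (S x) * \<pi> y) (D k))
          = sum_list (map (\<lambda>(x, y). \<pi> (h * S x) * \<pi> y) (D k))) \<and>
     (\<forall>h k. sum_list (map (\<lambda>(x, y). \<pi> x * \<pi> (S y) * \<pi> k) (D h))
          = sum_list (map (\<lambda>(x, y). \<pi> x * \<pi> (S y * k)) (D h))) \<and>
     (\<forall>h k. sum_list (map (\<lambda>(x, y). \<pi> (S x) * \<pi> y * \<pi> k) (D h))
          = sum_list (map (\<lambda>(x, y). \<pi> (S x) * \<pi> (y * k)) (D h)))"

end

(*
  Put e = \<pi>(1\<^sub>1)\<pi>(S 1\<^sub>2) and f = \<pi>(S 1\<^sub>1)\<pi>(1\<^sub>2), so that (2) and (3) read e = 1 and f = 1.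
  Combining (PR2)-(PR5) with the identities of a weak Hopf algebra that relate the counital maps
  \<epsilon>\<^sub>t, \<epsilon>\<^sub>s to \<Delta>(1), the sums in (1) and (4) collapse:
    \<pi>(h\<^sub>1)\<pi>(S h\<^sub>2)\<pi>(h\<^sub>3) = \<pi>(h) e = f \<pi>(h)   and   \<pi>(S h\<^sub>1)\<pi>(h\<^sub>2)\<pi>(S h\<^sub>3) = e \<pi>(S h).
  As \<pi>(1) = \<pi>(S 1) = 1, each of (1) and (4) is equivalent to e = 1 and to f = 1.
  If S is bijective, anti-comultiplicativity \<Delta>(S h) = S h\<^sub>2 \<otimes> S h\<^sub>1 turns (5) into (4), and
  \<Delta>(1) = S 1\<^sub>2 \<otimes> S 1\<^sub>1 turns the sums in (6) and (7) into e and f.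
*)

theory Submission
  imports Defs
begin

section \<open>Linear, bilinear and trilinear maps\<close>

text \<open>Unlike \<^const>\<open>Vector_Spaces.linear\<close>, these notions do not bundle the vector space axioms
  of domain and codomain, so most closure rules below hold without them.\<close>

definition klinear ::
  "('k::field \<Rightarrow> 'v::ab_group_add \<Rightarrow> 'v) \<Rightarrow> ('k \<Rightarrow> 'w::ab_group_add \<Rightarrow> 'w) \<Rightarrow> ('v \<Rightarrow> 'w) \<Rightarrow> bool"
  where "klinear s sW f \<longleftrightarrow> (\<forall>x y. f (x + y) = f x + f y) \<and> (\<forall>c x. f (s c x) = sW c (f x))"

definition kbilinear ::
  "('k::field \<Rightarrow> 'v::ab_group_add \<Rightarrow> 'v) \<Rightarrow> ('k \<Rightarrow> 'w::ab_group_add \<Rightarrow> 'w) \<Rightarrow> ('v \<Rightarrow> 'v \<Rightarrow> 'w) \<Rightarrow> bool"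
  where "kbilinear s sW F \<longleftrightarrow> (\<forall>a. klinear s sW (\<lambda>b. F a b)) \<and> (\<forall>b. klinear s sW (\<lambda>a. F a b))"

definition ktrilinear ::
  "('k::field \<Rightarrow> 'v::ab_group_add \<Rightarrow> 'v) \<Rightarrow> ('k \<Rightarrow> 'w::ab_group_add \<Rightarrow> 'w) \<Rightarrow> ('v \<Rightarrow> 'v \<Rightarrow> 'v \<Rightarrow> 'w) \<Rightarrow> bool"
  where "ktrilinear s sW G \<longleftrightarrow>
    (\<forall>b c. klinear s sW (\<lambda>a. G a b c)) \<and> (\<forall>a c. klinear s sW (\<lambda>b. G a b c)) \<and>
    (\<forall>a b. klinear s sW (\<lambda>c. G a b c))"

lemma kbilinearI:
  "(\<And>b. klinear s sW (\<lambda>a. F a b)) \<Longrightarrow> (\<And>a. klinear s sW (\<lambda>b. F a b)) \<Longrightarrow> kbilinear s sW F"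
  by (simp add: kbilinear_def)

lemma kbilinear_left: "kbilinear s sW F \<Longrightarrow> klinear s sW (\<lambda>a. F a b)"
  by (simp add: kbilinear_def)

lemma kbilinear_right: "kbilinear s sW F \<Longrightarrow> klinear s sW (\<lambda>b. F a b)"
  by (simp add: kbilinear_def)

lemma ktrilinearI:
  "(\<And>b c. klinear s sW (\<lambda>a. G a b c)) \<Longrightarrow> (\<And>a c. klinear s sW (\<lambda>b. G a b c)) \<Longrightarrow>
   (\<And>a b. klinear s sW (\<lambda>c. G a b c)) \<Longrightarrow> ktrilinear s sW G"
  by (simp add: ktrilinear_def)

lemma ktrilinear1: "ktrilinear s sW G \<Longrightarrow> klinear s sW (\<lambda>a. G a b c)"
  and ktrilinear2: "ktrilinear s sW G \<Longrightarrow> klinear s sW (\<lambda>b. G a b c)"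
  and ktrilinear3: "ktrilinear s sW G \<Longrightarrow> klinear s sW (\<lambda>c. G a b c)"
  by (simp_all add: ktrilinear_def)

lemma klinear_add: "klinear s sW f \<Longrightarrow> f (x + y) = f x + f y"
  and klinear_scale: "klinear s sW f \<Longrightarrow> f (s c x) = sW c (f x)"
  by (simp_all add: klinear_def)

lemma klinear_zero: "klinear s sW f \<Longrightarrow> f 0 = 0"
  using klinear_add[of s sW f 0 0] by simp

lemma klinear_sum_list: "klinear s sW f \<Longrightarrow> f (sum_list (map g xs)) = sum_list (map (\<lambda>q. f (g q)) xs)"
  by (induction xs) (simp_all add: klinear_zero klinear_add)

lemma linear_imp_klinear: "Vector_Spaces.linear s sW f \<Longrightarrow> klinear s sW f"
  unfolding klinear_def linear_iff_module_hom by (simp add: module_hom.add module_hom.scale)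

lemma klinear_ident: "klinear s s (\<lambda>x. x)"
  by (simp add: klinear_def)

lemma klinear_compose: "klinear s s g \<Longrightarrow> klinear s sW f \<Longrightarrow> klinear s sW (\<lambda>x. f (g x))"
  by (simp add: klinear_def)

lemma klinear_inv:
  assumes f: "klinear s s f" and "bij f"
  shows "klinear s s (inv f)"
proof -
  have inv_f: "inv f (f x) = x" for x using \<open>bij f\<close> by (simp add: bij_is_inj)
  have f_inv: "f (inv f x) = x" for x using \<open>bij f\<close> by (simp add: bij_is_surj surj_f_inv_f)
  show ?thesis unfolding klinear_def
  proof (intro conjI allI)
    fix x y
    have "f (inv f x + inv f y) = x + y" using klinear_add[OF f] f_inv by simp
    then show "inv f (x + y) = inv f x + inv f y" using inv_f by metis
  next
    fix c x
    have "f (s c (inv f x)) = s c x" using klinear_scale[OF f] f_inv by simp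
    then show "inv f (s c x) = s c (inv f x)" using inv_f by metis
  qed
qed

lemma klinear_add_fun:
  assumes "vector_space sW" "klinear s sW f" "klinear s sW g"
  shows "klinear s sW (\<lambda>x. f x + g x)"
proof -
  interpret W: vector_space sW by fact
  show ?thesis using assms(2,3) by (simp add: klinear_def W.scale_right_distrib algebra_simps)
qed

lemma klinear_sum_list_fun:
  assumes "vector_space sW" "\<And>a b. klinear s sW (g a b)"
  shows "klinear s sW (\<lambda>x. sum_list (map (\<lambda>(a, b). g a b x) xs))"
proof (induction xs)
  case Nil
  interpret W: vector_space sW by fact
  show ?case by (simp add: klinear_def)
next
  case (Cons p xs)
  then show ?case using klinear_add_fun[OF assms(1) assms(2) Cons.IH] by (cases p) simp
qed

lemma klinear_scale_fun:
  assumes "vector_space sW" "klinear s sW f"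
  shows "klinear s sW (\<lambda>x. sW c (f x))"
proof -
  interpret W: vector_space sW by fact
  show ?thesis using assms(2) by (simp add: klinear_def W.scale_right_distrib W.scale_left_commute[of c])
qed

lemma klinear_scalar_fun:
  assumes "vector_space sW" "klinear s (*) f"
  shows "klinear s sW (\<lambda>x. sW (f x) w)"
proof -
  interpret W: vector_space sW by fact
  show ?thesis using assms(2) by (simp add: klinear_def W.scale_left_distrib)
qed

lemma klinear_mult_left: "k_algebra sW \<Longrightarrow> klinear s sW f \<Longrightarrow> klinear s sW (\<lambda>x. u * f x)"
  unfolding klinear_def k_algebra_def by (metis distrib_left)

lemma klinear_mult_right: "k_algebra sW \<Longrightarrow> klinear s sW f \<Longrightarrow> klinear s sW (\<lambda>x. f x * u)"
  by (simp add: klinear_def k_algebra_def distrib_right)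

section \<open>Evaluating tensors on multilinear maps\<close>

definition supp :: "('x \<Rightarrow> 'k::zero) \<Rightarrow> 'x set" where
  "supp g = {q. g q \<noteq> 0}"

definition lin_ext :: "('k::field \<Rightarrow> 'w::ab_group_add \<Rightarrow> 'w) \<Rightarrow> ('x \<Rightarrow> 'w) \<Rightarrow> ('x \<Rightarrow> 'k) \<Rightarrow> 'w" where
  "lin_ext sW F g = (\<Sum>q\<in>supp g. sW (g q) (F q))"

lemma lin_ext_superset:
  assumes "vector_space sW" "finite T" "supp g \<subseteq> T"
  shows "lin_ext sW F g = (\<Sum>q\<in>T. sW (g q) (F q))"
proof -
  interpret W: vector_space sW by fact
  show ?thesis unfolding lin_ext_def
    by (rule sum.mono_neutral_left) (use assms(2,3) in \<open>auto simp: supp_def intro: finite_subset\<close>)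
qed

lemma in_kspan_lin_ext:
  assumes vs: "vector_space sW" and "in_kspan G g"
    and gen: "\<And>g. G g \<Longrightarrow> finite (supp g) \<and> lin_ext sW F g = 0"
  shows "finite (supp g) \<and> lin_ext sW F g = 0"
  using \<open>in_kspan G g\<close>
proof (induction rule: in_kspan.induct)
  case zero
  then show ?case by (simp add: supp_def lin_ext_def)
next
  case (gen g)
  then show ?case using assms(3) by blast
next
  case (add f g)
  interpret W: vector_space sW by fact
  let ?T = "supp f \<union> supp g"
  have fin: "finite ?T" using add by auto
  have sub: "supp (\<lambda>q. f q + g q) \<subseteq> ?T" by (auto simp: supp_def)
  have "lin_ext sW F (\<lambda>q. f q + g q) = (\<Sum>q\<in>?T. sW (f q) (F q)) + (\<Sum>q\<in>?T. sW (g q) (F q))"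
    using lin_ext_superset[OF vs fin sub] by (simp add: W.scale_left_distrib sum.distrib)
  also have "\<dots> = lin_ext sW F f + lin_ext sW F g"
    using lin_ext_superset[OF vs fin] by simp
  finally show ?case using add fin sub finite_subset by auto
next
  case (smult f c)
  interpret W: vector_space sW by fact
  have sub: "supp (\<lambda>q. c * f q) \<subseteq> supp f" by (auto simp: supp_def)
  have "lin_ext sW F (\<lambda>q. c * f q) = (\<Sum>q\<in>supp f. sW (c * f q) (F q))"
    using lin_ext_superset[OF vs _ sub] smult by simp
  also have "\<dots> = sW c (lin_ext sW F f)"
    by (simp add: lin_ext_def W.scale_sum_right)
  finally show ?case using smult sub finite_subset by auto
qed

lemma sum_scale_delta:
  assumes "vector_space sW" "finite T" "p \<in> T"
  shows "(\<Sum>q\<in>T. sW (delta p q) (F q)) = F p"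
proof -
  interpret W: vector_space sW by fact
  have "(\<Sum>q\<in>T. sW (delta p q) (F q)) = (\<Sum>q\<in>T. if q = p then F q else 0)"
    by (rule sum.cong) (auto simp: delta_def)
  then show ?thesis using assms by (simp add: sum.delta')
qed

lemma sum_scale_count_list:
  assumes vs: "vector_space sW" and "finite T" "set xs \<subseteq> T"
  shows "(\<Sum>q\<in>T. sW (of_nat (count_list xs q)) (F q)) = sum_list (map F xs)"
  using assms(3)
proof (induction xs)
  case Nil
  interpret W: vector_space sW by fact
  show ?case by simp
next
  case (Cons x xs)
  interpret W: vector_space sW by fact
  have "(\<Sum>q\<in>T. sW (of_nat (count_list (x # xs) q)) (F q))
      = (\<Sum>q\<in>T. sW (delta x q) (F q) + sW (of_nat (count_list xs q)) (F q))"
    by (rule sum.cong) (auto simp: delta_def W.scale_left_distrib)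
  then show ?case using Cons sum_scale_delta[OF vs assms(2), of x F] by (simp add: sum.distrib)
qed

lemma supp_fsum_subset: "supp (fsum xs :: 'x \<Rightarrow> 'k::field) \<subseteq> set xs"
  unfolding supp_def fsum_def by clarsimp (rule ccontr, simp)

lemma lin_ext_fsum:
  assumes "vector_space sW"
  shows "lin_ext sW F (fsum xs) = sum_list (map F xs)"
  unfolding lin_ext_superset[OF assms finite_set supp_fsum_subset]
  unfolding fsum_def by (rule sum_scale_count_list[OF assms finite_set order_refl])

lemma in_kspan_fsum_eval:
  fixes sW :: "'k::field \<Rightarrow> 'w::ab_group_add \<Rightarrow> 'w"
  assumes vs: "vector_space sW"
    and span: "in_kspan G (\<lambda>q. (fsum xs q :: 'k) - fsum ys q)"
    and gen: "\<And>g. G g \<Longrightarrow> finite (supp g) \<and> lin_ext sW F g = 0"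
  shows "sum_list (map F xs) = sum_list (map F ys)"
proof -
  interpret W: vector_space sW by fact
  let ?g = "\<lambda>q. (fsum xs q :: 'k) - fsum ys q"
  let ?T = "set xs \<union> set ys"
  have fsum_zero: "(fsum zs q :: 'k) = 0" if "q \<notin> set zs" for zs q
    using that by (simp add: fsum_def count_list_0_iff)
  have supp_T: "supp ?g \<subseteq> ?T" "supp (fsum xs :: _ \<Rightarrow> 'k) \<subseteq> ?T" "supp (fsum ys :: _ \<Rightarrow> 'k) \<subseteq> ?T"
    by (intro subsetI; simp add: supp_def; use fsum_zero in metis)+
  have "0 = (\<Sum>q\<in>?T. sW (fsum xs q) (F q)) - (\<Sum>q\<in>?T. sW (fsum ys q) (F q))"
    using in_kspan_lin_ext[OF vs span gen] lin_ext_superset[OF vs _ supp_T(1)]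
    by (simp add: W.scale_left_diff_distrib sum_subtractf)
  also have "\<dots> = lin_ext sW F (fsum xs) - lin_ext sW F (fsum ys)"
    using lin_ext_superset[OF vs _ supp_T(2)] lin_ext_superset[OF vs _ supp_T(3)] by simp
  finally show ?thesis by (simp add: lin_ext_fsum[OF vs])
qed

lemma lin_ext_delta3:
  fixes sW :: "'k::field \<Rightarrow> 'w::ab_group_add \<Rightarrow> 'w"
  assumes vs: "vector_space sW"
  shows "finite (supp (\<lambda>q. (delta p1 q :: 'k) - delta p2 q - delta p3 q)) \<and>
    lin_ext sW F (\<lambda>q. delta p1 q - delta p2 q - delta p3 q) = F p1 - F p2 - F p3"
proof -
  interpret W: vector_space sW by fact
  have sub: "supp (\<lambda>q. (delta p1 q :: 'k) - delta p2 q - delta p3 q) \<subseteq> {p1, p2, p3}"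
    by (auto simp: supp_def delta_def)
  show ?thesis
    using lin_ext_superset[OF vs _ sub] finite_subset[OF sub]
    by (simp add: W.scale_left_diff_distrib sum_subtractf sum_scale_delta[OF vs])
qed

lemma lin_ext_delta_scale:
  fixes sW :: "'k::field \<Rightarrow> 'w::ab_group_add \<Rightarrow> 'w"
  assumes vs: "vector_space sW"
  shows "finite (supp (\<lambda>q. (delta p1 q :: 'k) - c * delta p2 q)) \<and>
    lin_ext sW F (\<lambda>q. delta p1 q - c * delta p2 q) = F p1 - sW c (F p2)"
proof -
  interpret W: vector_space sW by fact
  have sub: "supp (\<lambda>q. (delta p1 q :: 'k) - c * delta p2 q) \<subseteq> {p1, p2}"
    by (auto simp: supp_def delta_def)
  have "(\<Sum>q\<in>{p1, p2}. sW (c * delta p2 q) (F q)) = sW c (\<Sum>q\<in>{p1, p2}. sW (delta p2 q) (F q))"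
    by (simp add: W.scale_sum_right)
  then show ?thesis
    using lin_ext_superset[OF vs _ sub] finite_subset[OF sub]
    by (simp add: W.scale_left_diff_distrib sum_subtractf sum_scale_delta[OF vs])
qed

lemma tensor2_eq_eval:
  assumes vs: "vector_space sW" and F: "kbilinear s sW F" and eq: "tensor2_eq s xs ys"
  shows "sum_list (map (\<lambda>(a, b). F a b) xs) = sum_list (map (\<lambda>(a, b). F a b) ys)"
proof (rule in_kspan_fsum_eval[OF vs eq[unfolded tensor2_eq_def]])
  fix g assume "bilin_rels s g"
  then show "finite (supp g) \<and> lin_ext sW (\<lambda>(a, b). F a b) g = 0"
    unfolding bilin_rels_def
    by (elim disjE exE) (simp_all add: lin_ext_delta3[OF vs] lin_ext_delta_scale[OF vs]
        klinear_add[OF kbilinear_left[OF F]] klinear_add[OF kbilinear_right[OF F]]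
        klinear_scale[OF kbilinear_left[OF F]] klinear_scale[OF kbilinear_right[OF F]])
qed

lemma tensor3_eq_eval:
  assumes vs: "vector_space sW" and G: "ktrilinear s sW G" and eq: "tensor3_eq s xs ys"
  shows "sum_list (map (\<lambda>(a, b, c). G a b c) xs) = sum_list (map (\<lambda>(a, b, c). G a b c) ys)"
proof (rule in_kspan_fsum_eval[OF vs eq[unfolded tensor3_eq_def]])
  fix g assume "trilin_rels s g"
  then show "finite (supp g) \<and> lin_ext sW (\<lambda>(a, b, c). G a b c) g = 0"
    unfolding trilin_rels_def
    by (elim disjE exE) (simp_all add: lin_ext_delta3[OF vs] lin_ext_delta_scale[OF vs]
        klinear_add[OF ktrilinear1[OF G]] klinear_add[OF ktrilinear2[OF G]]
        klinear_add[OF ktrilinear3[OF G]] klinear_scale[OF ktrilinear1[OF G]]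
        klinear_scale[OF ktrilinear2[OF G]] klinear_scale[OF ktrilinear3[OF G]])
qed

section \<open>Sweedler sums\<close>

text \<open>\<open>\<Sum> F(h\<^sub>1, h\<^sub>2)\<close> computed on the chosen representative \<open>D h\<close> of \<open>\<Delta>(h)\<close>; it only depends on
  \<open>\<Delta>(h)\<close> itself when \<open>F\<close> is bilinear (see \<open>tensor2_eq_eval\<close>).\<close>

definition sweedler :: "('h \<Rightarrow> ('h \<times> 'h) list) \<Rightarrow> ('h \<Rightarrow> 'h \<Rightarrow> 'v::comm_monoid_add) \<Rightarrow> 'h \<Rightarrow> 'v" where
  "sweedler D F h = sum_list (map (\<lambda>(a, b). F a b) (D h))"

abbreviation sweedler3 ::
  "('h \<Rightarrow> ('h \<times> 'h) list) \<Rightarrow> ('h \<Rightarrow> 'h \<Rightarrow> 'h \<Rightarrow> 'v::comm_monoid_add) \<Rightarrow> 'h \<Rightarrow> 'v" where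
  "sweedler3 D G h \<equiv> sweedler D (\<lambda>a c. sweedler D (\<lambda>x y. G x y c) a) h"

lemma sweedler_cong: "(\<And>a b. F a b = G a b) \<Longrightarrow> sweedler D F h = sweedler D G h"
  by (simp add: sweedler_def)

lemma sum_list_map_concat: "sum_list (map f (concat xss)) = sum_list (map (\<lambda>xs. sum_list (map f xs)) xss)"
  by (induction xss) simp_all

lemma sum_comult2: "sum_list (map (\<lambda>(x, y, z). G x y z) (comult2 D h)) = sweedler3 D G h"
  unfolding comult2_def sweedler_def
  by (simp add: sum_list_map_concat case_prod_beta' comp_def)

lemma sum_comult2':
  "sum_list (map (\<lambda>(x, y, z). G x y z) (comult2' D h)) = sweedler D (\<lambda>x b. sweedler D (\<lambda>y z. G x y z) b) h"
  unfolding comult2'_def sweedler_def by (simp add: sum_list_map_concat case_prod_beta' comp_def)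

lemma sum_tmult2: "sum_list (map (\<lambda>(a, b). F a b) (tmult2 xs ys)) =
   sum_list (map (\<lambda>(a, b). sum_list (map (\<lambda>(c, d). F (a * c) (b * d)) ys)) xs)"
  unfolding tmult2_def by (simp add: sum_list_map_concat case_prod_beta' comp_def)

lemma sum_tmult3: "sum_list (map (\<lambda>(a, b, c). G a b c) (tmult3 xs ys)) =
   sum_list (map (\<lambda>(a, b, c). sum_list (map (\<lambda>(a', b', c'). G (a * a') (b * b') (c * c')) ys)) xs)"
  unfolding tmult3_def by (simp add: sum_list_map_concat case_prod_beta' comp_def)

lemma sum_list_map_swap:
  fixes f :: "'x \<Rightarrow> 'y \<Rightarrow> 'a::comm_monoid_add"
  shows "sum_list (map (\<lambda>x. sum_list (map (f x) ys)) xs) = sum_list (map (\<lambda>y. sum_list (map (\<lambda>x. f x y) xs)) ys)"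
  by (induction xs) (simp_all add: sum_list_addf)

lemma sweedler_swap:
  "sweedler D (\<lambda>a b. sweedler D (F a b) y) x = sweedler D (\<lambda>c d. sweedler D (\<lambda>a b. F a b c d) x) y"
  unfolding sweedler_def using sum_list_map_swap[of "\<lambda>(a, b) (c, d). F a b c d" "D y" "D x"]
  by (simp add: case_prod_beta')

lemma sweedler_klinear: "klinear s sW f \<Longrightarrow> f (sweedler D F h) = sweedler D (\<lambda>a b. f (F a b)) h"
  unfolding sweedler_def by (simp add: klinear_sum_list case_prod_beta')

lemma klinear_sweedler_fun:
  "vector_space sW \<Longrightarrow> (\<And>a b. klinear s sW (G a b)) \<Longrightarrow> klinear s sW (\<lambda>x. sweedler D (\<lambda>a b. G a b x) h)"
  unfolding sweedler_def by (rule klinear_sum_list_fun)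

lemma sweedler_scale:
  assumes "vector_space sW"
  shows "sW c (sweedler D F h) = sweedler D (\<lambda>a b. sW c (F a b)) h"
proof -
  interpret W: vector_space sW by fact
  have "klinear sW sW (sW c)"
    by (simp add: klinear_def W.scale_right_distrib W.scale_left_commute[of c])
  then show ?thesis by (rule sweedler_klinear)
qed

lemma sweedler_scale_left:
  assumes "vector_space sW"
  shows "sweedler D (\<lambda>a b. sW (f a b) w) h = sW (sweedler D f h) w"
proof -
  interpret W: vector_space sW by fact
  have "klinear (*) sW (\<lambda>r. sW r w)"
    by (simp add: klinear_def W.scale_left_distrib)
  then show ?thesis by (rule sweedler_klinear[symmetric])
qed

lemma sweedler_mult_left: "(u::'a::semiring_0) * sweedler D F h = sweedler D (\<lambda>a b. u * F a b) h"
  unfolding sweedler_def by (simp add: sum_list_const_mult case_prod_beta')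

lemma sweedler_mult_right: "sweedler D F h * (u::'a::semiring_0) = sweedler D (\<lambda>a b. F a b * u) h"
  unfolding sweedler_def by (simp add: sum_list_mult_const case_prod_beta')

lemma kbilinear_left_compose:
  "kbilinear s sW F \<Longrightarrow> klinear s s g \<Longrightarrow> klinear s sW (\<lambda>x. F (g x) b)"
  by (rule klinear_compose[of s g sW "\<lambda>a. F a b"]) (simp_all add: kbilinear_left)

lemma kbilinear_right_compose:
  "kbilinear s sW F \<Longrightarrow> klinear s s g \<Longrightarrow> klinear s sW (\<lambda>x. F a (g x))"
  by (rule klinear_compose[of s g sW "\<lambda>b. F a b"]) (simp_all add: kbilinear_right)

section \<open>Weak Hopf algebras\<close>

locale weak_hopf =
  fixes s :: "'k::field \<Rightarrow> 'h::ring_1 \<Rightarrow> 'h"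
    and D :: "'h \<Rightarrow> ('h \<times> 'h) list"
    and \<epsilon> :: "'h \<Rightarrow> 'k"
    and S :: "'h \<Rightarrow> 'h"
  assumes weak_hopf: "weak_hopf_algebra s D \<epsilon> S"
begin

lemma k_algebra_H: "k_algebra s"
  using weak_hopf unfolding weak_hopf_algebra_def by blast

sublocale H: vector_space s
  using k_algebra_H by (simp add: k_algebra_def)

lemma scale_mult_left_H: "s c (x * y) = s c x * y"
  and scale_mult_right_H: "s c (x * y) = x * s c y"
  using k_algebra_H unfolding k_algebra_def by blast+

lemma scale_mult_scale_H: "s c x * s d y = s c (s d (x * y))"
  by (simp add: scale_mult_left_H[symmetric] scale_mult_right_H[symmetric] H.scale_left_commute)

lemma klinear_antipode: "klinear s s S"
  and klinear_counit: "klinear s (*) \<epsilon>"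
  using weak_hopf unfolding weak_hopf_algebra_def by (blast intro: linear_imp_klinear)+

lemma comult_add_scale_tensor: "tensor2_eq s (D (s c x + y)) (map (\<lambda>(a, b). (s c a, b)) (D x) @ D y)"
  and coassoc_tensor: "tensor3_eq s (comult2 D h) (comult2' D h)"
  and comult_mult_tensor: "tensor2_eq s (D (k * h)) (tmult2 (D k) (D h))"
  and comult_one_tensor1:
    "tensor3_eq s (tmult3 (map (\<lambda>(a, b). (1, a, b)) (D 1)) (map (\<lambda>(a, b). (a, b, 1)) (D 1))) (comult2 D 1)"
  and comult_one_tensor2:
    "tensor3_eq s (tmult3 (map (\<lambda>(a, b). (a, b, 1)) (D 1)) (map (\<lambda>(a, b). (1, a, b)) (D 1))) (comult2 D 1)"
  using weak_hopf unfolding weak_hopf_algebra_def by blast+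

lemma counit_left: "sweedler D (\<lambda>x y. s (\<epsilon> x) y) h = h"
  and counit_right: "sweedler D (\<lambda>x y. s (\<epsilon> y) x) h = h"
  and counit_mult1: "sweedler D (\<lambda>x y. \<epsilon> (k * x) * \<epsilon> (y * g)) h = \<epsilon> (k * h * g)"
  and counit_mult2: "sweedler D (\<lambda>x y. \<epsilon> (k * y) * \<epsilon> (x * g)) h = \<epsilon> (k * h * g)"
  using weak_hopf unfolding weak_hopf_algebra_def sweedler_def by blast+

definition eps_t :: "'h \<Rightarrow> 'h" where
  "eps_t h = sweedler D (\<lambda>a b. s (\<epsilon> (a * h)) b) 1"

definition eps_s :: "'h \<Rightarrow> 'h" where
  "eps_s h = sweedler D (\<lambda>a b. s (\<epsilon> (h * b)) a) 1"

lemma antipode_right: "sweedler D (\<lambda>x y. x * S y) h = eps_t h"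
  and antipode_left: "sweedler D (\<lambda>x y. S x * y) h = eps_s h"
  using weak_hopf unfolding weak_hopf_algebra_def sweedler_def eps_t_def eps_s_def by blast+

lemma antipode_triple: "S h = sweedler3 D (\<lambda>x y z. S x * y * S z) h"
  using weak_hopf unfolding weak_hopf_algebra_def sum_comult2 by blast

lemma klinear_antipode_comp: "klinear s s g \<Longrightarrow> klinear s s (\<lambda>x. S (g x))"
  by (rule klinear_compose[OF _ klinear_antipode])

lemma klinear_counit_comp: "klinear s s g \<Longrightarrow> klinear s (*) (\<lambda>x. \<epsilon> (g x))"
  by (rule klinear_compose[OF _ klinear_counit])

lemma klinear_mult_left_H: "klinear s s f \<Longrightarrow> klinear s s (\<lambda>x. u * f x)"
  and klinear_mult_right_H: "klinear s s f \<Longrightarrow> klinear s s (\<lambda>x. f x * u)"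
  by (simp_all add: klinear_mult_left[OF k_algebra_H] klinear_mult_right[OF k_algebra_H])

lemma klinear_eps_t: "klinear s s eps_t"
  and klinear_eps_s: "klinear s s eps_s"
  unfolding eps_t_def[abs_def] eps_s_def[abs_def]
  by (intro klinear_sweedler_fun[OF H.vector_space_axioms] klinear_scalar_fun[OF H.vector_space_axioms]
      klinear_counit_comp klinear_mult_left_H klinear_mult_right_H klinear_ident)+

lemmas klinear_intros =
  klinear_ident klinear_antipode_comp klinear_counit_comp klinear_mult_left_H klinear_mult_right_H
  klinear_compose[OF _ klinear_eps_t] klinear_compose[OF _ klinear_eps_s]
  klinear_scale_fun[OF H.vector_space_axioms] klinear_scalar_fun[OF H.vector_space_axioms]
  klinear_sweedler_fun[OF H.vector_space_axioms]

lemma sweedler_comult_add_scale: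
  assumes vs: "vector_space sW" and F: "kbilinear s sW F"
  shows "sweedler D F (s c x + y) = sW c (sweedler D F x) + sweedler D F y"
proof -
  have "sweedler D F (s c x + y) = sum_list (map (\<lambda>(a, b). F a b) (map (\<lambda>(a, b). (s c a, b)) (D x) @ D y))"
    unfolding sweedler_def by (rule tensor2_eq_eval[OF vs F comult_add_scale_tensor])
  also have "\<dots> = sweedler D (\<lambda>a b. F (s c a) b) x + sweedler D F y"
    by (simp add: sweedler_def comp_def case_prod_beta')
  finally show ?thesis
    by (simp add: sweedler_scale[OF vs] klinear_scale[OF kbilinear_left[OF F]])
qed

lemma klinear_sweedler:
  assumes vs: "vector_space sW" and F: "kbilinear s sW F"
  shows "klinear s sW (sweedler D F)"
proof -
  interpret W: vector_space sW by fact
  have "sweedler D F 0 = 0"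
    using sweedler_comult_add_scale[OF vs F, of 1 0 0] by simp
  then show ?thesis unfolding klinear_def
    using sweedler_comult_add_scale[OF vs F, of 1] sweedler_comult_add_scale[OF vs F, of _ _ 0] by simp
qed

lemma klinear_sweedler_comp:
  "vector_space sW \<Longrightarrow> kbilinear s sW F \<Longrightarrow> klinear s s g \<Longrightarrow> klinear s sW (\<lambda>x. sweedler D F (g x))"
  by (rule klinear_compose[of s g sW "sweedler D F"]) (simp_all add: klinear_sweedler)

lemmas klinear_vs_intros = klinear_scale_fun klinear_scalar_fun klinear_sweedler_fun klinear_sweedler_comp

lemma sweedler_coassoc:
  assumes "vector_space sW" "ktrilinear s sW G"
  shows "sweedler3 D G h = sweedler D (\<lambda>x b. sweedler D (\<lambda>y z. G x y z) b) h"
  using tensor3_eq_eval[OF assms coassoc_tensor[of h]] by (simp add: sum_comult2 sum_comult2')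

lemma sweedler_comult_mult:
  assumes "vector_space sW" "kbilinear s sW F"
  shows "sweedler D F (k * h) = sweedler D (\<lambda>a b. sweedler D (\<lambda>c d. F (a * c) (b * d)) h) k"
  using tensor2_eq_eval[OF assms comult_mult_tensor[of k h]] by (simp add: sweedler_def sum_tmult2)

lemma sweedler_comult_one1:
  assumes "vector_space sW" "ktrilinear s sW G"
  shows "sweedler3 D G 1 = sweedler D (\<lambda>a b. sweedler D (\<lambda>a' b'. G a' (a * b') b) 1) 1"
  using tensor3_eq_eval[OF assms comult_one_tensor1]
  unfolding sum_comult2 sum_tmult3 by (simp add: sweedler_def comp_def case_prod_beta')

lemma sweedler_comult_one2:
  assumes "vector_space sW" "ktrilinear s sW G"
  shows "sweedler3 D G 1 = sweedler D (\<lambda>a b. sweedler D (\<lambda>a' b'. G a (b * a') b') 1) 1"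
  using tensor3_eq_eval[OF assms comult_one_tensor2]
  unfolding sum_comult2 sum_tmult3 by (simp add: sweedler_def comp_def case_prod_beta')

lemma klinear_counit_expand_right:
  assumes f: "klinear s sW f"
  shows "f h = sweedler D (\<lambda>u v. sW (\<epsilon> v) (f u)) h"
proof -
  have "f h = f (sweedler D (\<lambda>x y. s (\<epsilon> y) x) h)" by (simp only: counit_right)
  then show ?thesis by (simp add: sweedler_klinear[OF f] klinear_scale[OF f])
qed

lemma klinear_counit_expand_left:
  assumes f: "klinear s sW f"
  shows "f h = sweedler D (\<lambda>u v. sW (\<epsilon> u) (f v)) h"
proof -
  have "f h = f (sweedler D (\<lambda>x y. s (\<epsilon> x) y) h)" by (simp only: counit_left)
  then show ?thesis by (simp add: sweedler_klinear[OF f] klinear_scale[OF f])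
qed

lemma klinear_eps_t_apply:
  assumes f: "klinear s sW f"
  shows "f (eps_t h) = sweedler D (\<lambda>a b. sW (\<epsilon> (a * h)) (f b)) 1"
  unfolding eps_t_def by (simp add: sweedler_klinear[OF f] klinear_scale[OF f])

lemma klinear_eps_s_apply:
  assumes f: "klinear s sW f"
  shows "f (eps_s h) = sweedler D (\<lambda>a b. sW (\<epsilon> (h * b)) (f a)) 1"
  unfolding eps_s_def by (simp add: sweedler_klinear[OF f] klinear_scale[OF f])

text \<open>Identities in \<open>H \<otimes> H\<close> are stated by evaluating both sides on an arbitrary bilinear \<open>F\<close>;
  e.g. the next lemma is \<open>x\<^sub>1 \<otimes> \<epsilon>\<^sub>t(x\<^sub>2) = 1\<^sub>1x \<otimes> 1\<^sub>2\<close>.\<close>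

lemma sweedler_eps_t_right:
  assumes vs: "vector_space sW" and F: "kbilinear s sW F"
  shows "sweedler D (\<lambda>a b. F a (eps_t b)) x = sweedler D (\<lambda>a b. F (a * x) b) 1"
proof -
  note lin = kbilinearI ktrilinearI kbilinear_left_compose[OF F] kbilinear_right_compose[OF F]
    klinear_vs_intros[OF vs] klinear_intros
  have "sweedler D (\<lambda>p q. F (p * x) q) 1 = sweedler D (\<lambda>p q. sweedler D (\<lambda>u v. sW (\<epsilon> v) (F u q)) (p * x)) 1"
    by (rule sweedler_cong, rule klinear_counit_expand_right[OF kbilinear_left[OF F]])
  also have "\<dots> = sweedler D (\<lambda>p q. sweedler D (\<lambda>a b. sweedler D (\<lambda>c d. sW (\<epsilon> (b * d)) (F (a * c) q)) x) p) 1"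
    by (rule sweedler_cong, rule sweedler_comult_mult[OF vs]) (intro lin)
  also have "\<dots> = sweedler D (\<lambda>a b. sweedler D (\<lambda>a' b'. sweedler D (\<lambda>c d. sW (\<epsilon> (a * b' * d)) (F (a' * c) b)) x) 1) 1"
    by (rule sweedler_comult_one1[OF vs]) (intro lin)
  also have "\<dots> = sweedler D (\<lambda>a b. sweedler D (\<lambda>c d. sW (\<epsilon> (a * d)) (F c b)) x) 1"
  proof (rule sweedler_cong)
    fix a b
    have "sweedler D (\<lambda>c d. sW (\<epsilon> (a * d)) (F c b)) (1 * x) =
      sweedler D (\<lambda>a' b'. sweedler D (\<lambda>c d. sW (\<epsilon> (a * (b' * d))) (F (a' * c) b)) x) 1"
      by (rule sweedler_comult_mult[OF vs]) (intro lin)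
    then show "sweedler D (\<lambda>a' b'. sweedler D (\<lambda>c d. sW (\<epsilon> (a * b' * d)) (F (a' * c) b)) x) 1 =
      sweedler D (\<lambda>c d. sW (\<epsilon> (a * d)) (F c b)) x"
      by (simp add: mult.assoc)
  qed
  also have "\<dots> = sweedler D (\<lambda>c d. sweedler D (\<lambda>a b. sW (\<epsilon> (a * d)) (F c b)) 1) x"
    by (rule sweedler_swap)
  also have "\<dots> = sweedler D (\<lambda>c d. F c (eps_t d)) x"
    by (rule sweedler_cong) (simp only: klinear_eps_t_apply[OF kbilinear_right[OF F]])
  finally show ?thesis by simp
qed

lemma sweedler_eps_s_left:
  assumes vs: "vector_space sW" and F: "kbilinear s sW F"
  shows "sweedler D (\<lambda>a b. F (eps_s a) b) x = sweedler D (\<lambda>a b. F a (x * b)) 1"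
proof -
  note lin = kbilinearI ktrilinearI kbilinear_left_compose[OF F] kbilinear_right_compose[OF F]
    klinear_vs_intros[OF vs] klinear_intros
  have "sweedler D (\<lambda>p q. F p (x * q)) 1 = sweedler D (\<lambda>p q. sweedler D (\<lambda>u v. sW (\<epsilon> u) (F p v)) (x * q)) 1"
    by (rule sweedler_cong, rule klinear_counit_expand_left[OF kbilinear_right[OF F]])
  also have "\<dots> = sweedler D (\<lambda>p q. sweedler D (\<lambda>a b. sweedler D (\<lambda>c d. sW (\<epsilon> (a * c)) (F p (b * d))) q) x) 1"
    by (rule sweedler_cong, rule sweedler_comult_mult[OF vs]) (intro lin)
  also have "\<dots> = sweedler D (\<lambda>p q. sweedler D (\<lambda>c d. sweedler D (\<lambda>a b. sW (\<epsilon> (a * c)) (F p (b * d))) x) q) 1"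
    by (rule sweedler_cong, rule sweedler_swap)
  also have "\<dots> = sweedler D (\<lambda>r d. sweedler D (\<lambda>p c. sweedler D (\<lambda>a b. sW (\<epsilon> (a * c)) (F p (b * d))) x) r) 1"
    by (rule sweedler_coassoc[OF vs, symmetric]) (intro lin)
  also have "\<dots> = sweedler D (\<lambda>a0 b0. sweedler D (\<lambda>a' b'. sweedler D (\<lambda>a b. sW (\<epsilon> (a * (a0 * b'))) (F a' (b * b0))) x) 1) 1"
    by (rule sweedler_comult_one1[OF vs]) (intro lin)
  also have "\<dots> = sweedler D (\<lambda>a' b'. sweedler D (\<lambda>a0 b0. sweedler D (\<lambda>a b. sW (\<epsilon> (a * (a0 * b'))) (F a' (b * b0))) x) 1) 1"
    by (rule sweedler_swap)
  also have "\<dots> = sweedler D (\<lambda>a' b'. sweedler D (\<lambda>a b. sW (\<epsilon> (a * b')) (F a' b)) x) 1"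
  proof (rule sweedler_cong)
    fix a' b'
    have "sweedler D (\<lambda>a b. sW (\<epsilon> (a * b')) (F a' b)) (x * 1) =
      sweedler D (\<lambda>a b. sweedler D (\<lambda>a0 b0. sW (\<epsilon> (a * a0 * b')) (F a' (b * b0))) 1) x"
      by (rule sweedler_comult_mult[OF vs]) (intro lin)
    then show "sweedler D (\<lambda>a0 b0. sweedler D (\<lambda>a b. sW (\<epsilon> (a * (a0 * b'))) (F a' (b * b0))) x) 1 =
      sweedler D (\<lambda>a b. sW (\<epsilon> (a * b')) (F a' b)) x"
      by (simp add: mult.assoc sweedler_swap[of _ "\<lambda>a0 b0 a b. sW (\<epsilon> (a * (a0 * b'))) (F a' (b * b0))"])
  qed
  also have "\<dots> = sweedler D (\<lambda>a b. sweedler D (\<lambda>a' b'. sW (\<epsilon> (a * b')) (F a' b)) 1) x"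
    by (rule sweedler_swap)
  also have "\<dots> = sweedler D (\<lambda>a b. F (eps_s a) b) x"
    by (rule sweedler_cong) (simp only: klinear_eps_s_apply[OF kbilinear_left[OF F]])
  finally show ?thesis by simp
qed

lemma antipode_eps_t: "S x = sweedler D (\<lambda>a b. S a * eps_t b) x"
proof -
  have "S x = sweedler D (\<lambda>a c. sweedler D (\<lambda>u v. S u * v * S c) a) x" by (rule antipode_triple)
  also have "\<dots> = sweedler D (\<lambda>u b. sweedler D (\<lambda>v w. S u * v * S w) b) x"
    by (rule sweedler_coassoc[OF H.vector_space_axioms]) (intro ktrilinearI klinear_intros)
  also have "\<dots> = sweedler D (\<lambda>u b. S u * eps_t b) x"
    by (rule sweedler_cong) (simp add: antipode_right[symmetric] sweedler_mult_left mult.assoc)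
  finally show ?thesis .
qed

lemma antipode_eps_s: "S x = sweedler D (\<lambda>a b. eps_s a * S b) x"
proof -
  have "S x = sweedler D (\<lambda>a c. sweedler D (\<lambda>u v. S u * v * S c) a) x" by (rule antipode_triple)
  also have "\<dots> = sweedler D (\<lambda>a b. eps_s a * S b) x"
    by (rule sweedler_cong) (simp add: antipode_left[symmetric] sweedler_mult_right mult.assoc)
  finally show ?thesis .
qed

lemma antipode_comult_one1: "S x = sweedler D (\<lambda>a b. S (a * x) * b) 1"
proof -
  have F: "kbilinear s s (\<lambda>a b. S a * b)" by (intro kbilinearI klinear_intros)
  show ?thesis using antipode_eps_t[of x] sweedler_eps_t_right[OF H.vector_space_axioms F, of x] by simp
qed

lemma antipode_comult_one2: "S x = sweedler D (\<lambda>a b. a * S (x * b)) 1"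
proof -
  have F: "kbilinear s s (\<lambda>a b. a * S b)" by (intro kbilinearI klinear_intros)
  show ?thesis using antipode_eps_s[of x] sweedler_eps_s_left[OF H.vector_space_axioms F, of x] by simp
qed

lemma antipode_one: "S 1 = 1"
proof -
  have "S 1 = sweedler D (\<lambda>a b. S (a * 1) * b) 1" by (rule antipode_comult_one1)
  also have "\<dots> = sweedler D (\<lambda>a b. S a * b) 1" by simp
  also have "\<dots> = eps_s 1" by (rule antipode_left)
  also have "\<dots> = 1" unfolding eps_s_def using counit_right[of 1] by simp
  finally show ?thesis .
qed

lemma eps_s_antipode: "eps_s y = sweedler D (\<lambda>a b. s (\<epsilon> (y * a)) (S b)) 1"
proof -
  have "sweedler D (\<lambda>a q. sweedler D (\<lambda>u v. s (\<epsilon> (y * a)) (S u * v)) q) 1 = sweedler D (\<lambda>a q. s (\<epsilon> (y * a)) (eps_s q)) 1"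
    by (rule sweedler_cong) (simp add: antipode_left[symmetric] sweedler_scale[OF H.vector_space_axioms])
  also have "\<dots> = sweedler D (\<lambda>a q. sweedler D (\<lambda>a' b'. s (\<epsilon> (y * a) * \<epsilon> (q * b')) a') 1) 1"
    unfolding eps_s_def by (rule sweedler_cong) (simp add: sweedler_scale[OF H.vector_space_axioms] H.scale_scale)
  also have "\<dots> = sweedler D (\<lambda>a' b'. sweedler D (\<lambda>a q. s (\<epsilon> (y * a) * \<epsilon> (q * b')) a') 1) 1"
    by (rule sweedler_swap)
  also have "\<dots> = sweedler D (\<lambda>a' b'. s (\<epsilon> (y * 1 * b')) a') 1"
    by (rule sweedler_cong) (simp add: sweedler_scale_left[OF H.vector_space_axioms] counit_mult1)
  also have "\<dots> = eps_s y" by (simp add: eps_s_def)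
  finally have "eps_s y = sweedler D (\<lambda>a q. sweedler D (\<lambda>u v. s (\<epsilon> (y * a)) (S u * v)) q) 1" by simp
  also have "\<dots> = sweedler D (\<lambda>r v. sweedler D (\<lambda>a u. s (\<epsilon> (y * a)) (S u * v)) r) 1"
    by (rule sweedler_coassoc[OF H.vector_space_axioms, symmetric]) (intro ktrilinearI klinear_intros)
  also have "\<dots> = sweedler D (\<lambda>a b. sweedler D (\<lambda>a' b'. s (\<epsilon> (y * a')) (S (a * b') * b)) 1) 1"
    by (rule sweedler_comult_one1[OF H.vector_space_axioms]) (intro ktrilinearI klinear_intros)
  also have "\<dots> = sweedler D (\<lambda>a' b'. sweedler D (\<lambda>a b. s (\<epsilon> (y * a')) (S (a * b') * b)) 1) 1"
    by (rule sweedler_swap)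
  also have "\<dots> = sweedler D (\<lambda>a' b'. s (\<epsilon> (y * a')) (sweedler D (\<lambda>a b. S (a * b') * b) 1)) 1"
    by (rule sweedler_cong) (simp add: sweedler_scale[OF H.vector_space_axioms])
  also have "\<dots> = sweedler D (\<lambda>a' b'. s (\<epsilon> (y * a')) (S b')) 1"
    by (rule sweedler_cong) (simp only: antipode_comult_one1[symmetric])
  finally show ?thesis .
qed

lemma eps_t_antipode: "eps_t y = sweedler D (\<lambda>a b. s (\<epsilon> (b * y)) (S a)) 1"
proof -
  have "sweedler D (\<lambda>p c. sweedler D (\<lambda>u v. s (\<epsilon> (c * y)) (u * S v)) p) 1 = sweedler D (\<lambda>p c. s (\<epsilon> (c * y)) (eps_t p)) 1"
    by (rule sweedler_cong) (simp add: antipode_right[symmetric] sweedler_scale[OF H.vector_space_axioms])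
  also have "\<dots> = sweedler D (\<lambda>p c. sweedler D (\<lambda>a' b'. s (\<epsilon> (a' * p) * \<epsilon> (c * y)) b') 1) 1"
    unfolding eps_t_def by (rule sweedler_cong) (simp add: sweedler_scale[OF H.vector_space_axioms] H.scale_scale mult.commute)
  also have "\<dots> = sweedler D (\<lambda>a' b'. sweedler D (\<lambda>p c. s (\<epsilon> (a' * p) * \<epsilon> (c * y)) b') 1) 1"
    by (rule sweedler_swap)
  also have "\<dots> = sweedler D (\<lambda>a' b'. s (\<epsilon> (a' * 1 * y)) b') 1"
    by (rule sweedler_cong) (simp add: sweedler_scale_left[OF H.vector_space_axioms] counit_mult1)
  also have "\<dots> = eps_t y" by (simp add: eps_t_def)
  finally have "eps_t y = sweedler D (\<lambda>p c. sweedler D (\<lambda>u v. s (\<epsilon> (c * y)) (u * S v)) p) 1" by simp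
  also have "\<dots> = sweedler D (\<lambda>a b. sweedler D (\<lambda>a' b'. s (\<epsilon> (b * y)) (a' * S (a * b'))) 1) 1"
    by (rule sweedler_comult_one1[OF H.vector_space_axioms]) (intro ktrilinearI klinear_intros)
  also have "\<dots> = sweedler D (\<lambda>a b. s (\<epsilon> (b * y)) (sweedler D (\<lambda>a' b'. a' * S (a * b')) 1)) 1"
    by (rule sweedler_cong) (simp add: sweedler_scale[OF H.vector_space_axioms])
  also have "\<dots> = sweedler D (\<lambda>a b. s (\<epsilon> (b * y)) (S a)) 1"
    by (rule sweedler_cong) (simp only: antipode_comult_one2[symmetric])
  finally show ?thesis .
qed

lemma sweedler_eps_s_right:
  assumes vs: "vector_space sW" and F: "kbilinear s sW F"
  shows "sweedler D (\<lambda>a b. F a (eps_s b)) h = sweedler D (\<lambda>p q. F (h * p) (S q)) 1"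
proof -
  note lin = kbilinearI ktrilinearI kbilinear_left_compose[OF F] kbilinear_right_compose[OF F]
    klinear_vs_intros[OF vs] klinear_intros
  have "sweedler D (\<lambda>p q. F (h * p) (S q)) 1 = sweedler D (\<lambda>p q. sweedler D (\<lambda>u v. sW (\<epsilon> v) (F u (S q))) (h * p)) 1"
    by (rule sweedler_cong, rule klinear_counit_expand_right[OF kbilinear_left[OF F]])
  also have "\<dots> = sweedler D (\<lambda>p q. sweedler D (\<lambda>a b. sweedler D (\<lambda>c d. sW (\<epsilon> (b * d)) (F (a * c) (S q))) p) h) 1"
    by (rule sweedler_cong, rule sweedler_comult_mult[OF vs]) (intro lin)
  also have "\<dots> = sweedler D (\<lambda>p q. sweedler D (\<lambda>c d. sweedler D (\<lambda>a b. sW (\<epsilon> (b * d)) (F (a * c) (S q))) h) p) 1"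
    by (rule sweedler_cong, rule sweedler_swap)
  also have "\<dots> = sweedler D (\<lambda>a0 b0. sweedler D (\<lambda>a' b'. sweedler D (\<lambda>a b. sW (\<epsilon> (b * (b0 * a'))) (F (a * a0) (S b'))) h) 1) 1"
    by (rule sweedler_comult_one2[OF vs]) (intro lin)
  also have "\<dots> = sweedler D (\<lambda>a' b'. sweedler D (\<lambda>a0 b0. sweedler D (\<lambda>a b. sW (\<epsilon> (b * (b0 * a'))) (F (a * a0) (S b'))) h) 1) 1"
    by (rule sweedler_swap)
  also have "\<dots> = sweedler D (\<lambda>a' b'. sweedler D (\<lambda>a b. sW (\<epsilon> (b * a')) (F a (S b'))) h) 1"
  proof (rule sweedler_cong)
    fix a' b'
    have "sweedler D (\<lambda>a b. sW (\<epsilon> (b * a')) (F a (S b'))) (h * 1) =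
      sweedler D (\<lambda>a b. sweedler D (\<lambda>a0 b0. sW (\<epsilon> (b * b0 * a')) (F (a * a0) (S b'))) 1) h"
      by (rule sweedler_comult_mult[OF vs]) (intro lin)
    then show "sweedler D (\<lambda>a0 b0. sweedler D (\<lambda>a b. sW (\<epsilon> (b * (b0 * a'))) (F (a * a0) (S b'))) h) 1 =
      sweedler D (\<lambda>a b. sW (\<epsilon> (b * a')) (F a (S b'))) h"
      by (simp add: mult.assoc sweedler_swap[of _ "\<lambda>a0 b0 a b. sW (\<epsilon> (b * (b0 * a'))) (F (a * a0) (S b'))"])
  qed
  also have "\<dots> = sweedler D (\<lambda>a b. sweedler D (\<lambda>a' b'. sW (\<epsilon> (b * a')) (F a (S b'))) 1) h"
    by (rule sweedler_swap)
  also have "\<dots> = sweedler D (\<lambda>a b. F a (eps_s b)) h"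
    by (rule sweedler_cong) (simp add: eps_s_antipode sweedler_klinear[OF kbilinear_right[OF F]] klinear_scale[OF kbilinear_right[OF F]])
  finally show ?thesis by simp
qed

lemma sweedler_eps_t_left:
  assumes vs: "vector_space sW" and F: "kbilinear s sW F"
  shows "sweedler D (\<lambda>a b. F (eps_t a) b) x = sweedler D (\<lambda>p q. F (S p) (q * x)) 1"
proof -
  note lin = kbilinearI ktrilinearI kbilinear_left_compose[OF F] kbilinear_right_compose[OF F]
    klinear_vs_intros[OF vs] klinear_intros
  have "sweedler D (\<lambda>p q. F (S p) (q * x)) 1 = sweedler D (\<lambda>p q. sweedler D (\<lambda>u v. sW (\<epsilon> u) (F (S p) v)) (q * x)) 1"
    by (rule sweedler_cong, rule klinear_counit_expand_left[OF kbilinear_right[OF F]])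
  also have "\<dots> = sweedler D (\<lambda>p q. sweedler D (\<lambda>c d. sweedler D (\<lambda>a b. sW (\<epsilon> (c * a)) (F (S p) (d * b))) x) q) 1"
    by (rule sweedler_cong, rule sweedler_comult_mult[OF vs]) (intro lin)
  also have "\<dots> = sweedler D (\<lambda>r d. sweedler D (\<lambda>p c. sweedler D (\<lambda>a b. sW (\<epsilon> (c * a)) (F (S p) (d * b))) x) r) 1"
    by (rule sweedler_coassoc[OF vs, symmetric]) (intro lin)
  also have "\<dots> = sweedler D (\<lambda>a0 b0. sweedler D (\<lambda>a' b'. sweedler D (\<lambda>a b. sW (\<epsilon> (b0 * a' * a)) (F (S a0) (b' * b))) x) 1) 1"
    by (rule sweedler_comult_one2[OF vs]) (intro lin)
  also have "\<dots> = sweedler D (\<lambda>a0 b0. sweedler D (\<lambda>a b. sW (\<epsilon> (b0 * a)) (F (S a0) b)) x) 1"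
  proof (rule sweedler_cong)
    fix a0 b0
    have "sweedler D (\<lambda>a b. sW (\<epsilon> (b0 * a)) (F (S a0) b)) (1 * x) =
      sweedler D (\<lambda>a' b'. sweedler D (\<lambda>a b. sW (\<epsilon> (b0 * (a' * a))) (F (S a0) (b' * b))) x) 1"
      by (rule sweedler_comult_mult[OF vs]) (intro lin)
    then show "sweedler D (\<lambda>a' b'. sweedler D (\<lambda>a b. sW (\<epsilon> (b0 * a' * a)) (F (S a0) (b' * b))) x) 1 =
      sweedler D (\<lambda>a b. sW (\<epsilon> (b0 * a)) (F (S a0) b)) x"
      by (simp add: mult.assoc)
  qed
  also have "\<dots> = sweedler D (\<lambda>a b. sweedler D (\<lambda>a0 b0. sW (\<epsilon> (b0 * a)) (F (S a0) b)) 1) x"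
    by (rule sweedler_swap)
  also have "\<dots> = sweedler D (\<lambda>a b. F (eps_t a) b) x"
    by (rule sweedler_cong) (simp add: eps_t_antipode sweedler_klinear[OF kbilinear_left[OF F]] klinear_scale[OF kbilinear_left[OF F]])
  finally show ?thesis by simp
qed

lemma sweedler_one_antipode:
  assumes vs: "vector_space sW" and F: "kbilinear s sW F"
  shows "sweedler D F 1 = sweedler D (\<lambda>a b. F (S b) (S a)) 1"
proof -
  note lin = kbilinearI ktrilinearI kbilinear_left_compose[OF F] kbilinear_right_compose[OF F]
    klinear_vs_intros[OF vs] klinear_intros
  have "sweedler D F 1 = sweedler D (\<lambda>a b. F (a * 1) b) 1" by simp
  also have "\<dots> = sweedler D (\<lambda>a b. F a (eps_t b)) 1" by (rule sweedler_eps_t_right[OF vs F, symmetric])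
  also have "\<dots> = sweedler D (\<lambda>a b. sweedler D (\<lambda>a' b'. sW (\<epsilon> (a' * b)) (F a b')) 1) 1"
    by (rule sweedler_cong) (simp only: klinear_eps_t_apply[OF kbilinear_right[OF F]])
  also have "\<dots> = sweedler D (\<lambda>a' b'. sweedler D (\<lambda>a b. sW (\<epsilon> (a' * b)) (F a b')) 1) 1"
    by (rule sweedler_swap)
  also have "\<dots> = sweedler D (\<lambda>a' b'. F (eps_s a') b') 1"
    by (rule sweedler_cong) (simp only: klinear_eps_s_apply[OF kbilinear_left[OF F]])
  also have "\<dots> = sweedler D (\<lambda>a' b'. sweedler D (\<lambda>a b. sW (\<epsilon> (a' * a)) (F (S b) b')) 1) 1"
    by (rule sweedler_cong) (simp add: eps_s_antipode sweedler_klinear[OF kbilinear_left[OF F]] klinear_scale[OF kbilinear_left[OF F]])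
  also have "\<dots> = sweedler D (\<lambda>a b. sweedler D (\<lambda>a' b'. sW (\<epsilon> (a' * a)) (F (S b) b')) 1) 1"
    by (rule sweedler_swap)
  also have "\<dots> = sweedler D (\<lambda>a b. F (S b) (eps_t a)) 1"
    by (rule sweedler_cong) (simp only: klinear_eps_t_apply[OF kbilinear_right[OF F]])
  also have "\<dots> = sweedler D (\<lambda>p q. F (S (q * 1)) (S p)) 1"
  proof -
    have b: "kbilinear s sW (\<lambda>P Q. F (S Q) P)"
      by (intro lin)
    show ?thesis using sweedler_eps_t_left[OF vs b, of 1] by simp
  qed
  finally show ?thesis by simp
qed

lemma counit_eps_s_mult: "\<epsilon> (eps_s x * w) = \<epsilon> (x * w)"
proof -
  have "\<epsilon> (eps_s x * w) = sweedler D (\<lambda>a b. \<epsilon> (x * b) * \<epsilon> (a * w)) 1"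
    unfolding eps_s_def by (simp add: sweedler_mult_right scale_mult_left_H[symmetric] sweedler_klinear[OF klinear_counit] klinear_scale[OF klinear_counit])
  also have "\<dots> = \<epsilon> (x * 1 * w)" by (rule counit_mult2)
  finally show ?thesis by simp
qed

lemma eps_s_eps_s_mult: "eps_s (eps_s x * y) = eps_s (x * y)"
  unfolding eps_s_def[of "eps_s x * y"] eps_s_def[of "x * y"]
  by (rule sweedler_cong) (simp add: mult.assoc counit_eps_s_mult)

lemma sweedler_eps_s:
  assumes vs: "vector_space sW" and F: "kbilinear s sW F"
  shows "sweedler D F (eps_s x) = sweedler D (\<lambda>a b. F a (b * eps_s x)) 1"
proof -
  note lin = kbilinearI ktrilinearI kbilinear_left_compose[OF F] kbilinear_right_compose[OF F]
    klinear_vs_intros[OF vs] klinear_intros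
  have "sweedler D F (eps_s x) = sweedler D (\<lambda>p q. sW (\<epsilon> (x * q)) (sweedler D F p)) 1"
    by (rule klinear_eps_s_apply[OF klinear_sweedler[OF vs F]])
  also have "\<dots> = sweedler D (\<lambda>p q. sweedler D (\<lambda>u v. sW (\<epsilon> (x * q)) (F u v)) p) 1"
    by (rule sweedler_cong) (simp add: sweedler_scale[OF vs])
  also have "\<dots> = sweedler D (\<lambda>a b. sweedler D (\<lambda>a' b'. sW (\<epsilon> (x * b')) (F a (b * a'))) 1) 1"
    by (rule sweedler_comult_one2[OF vs]) (intro lin)
  also have "\<dots> = sweedler D (\<lambda>a b. F a (b * eps_s x)) 1"
  proof (rule sweedler_cong)
    fix a b
    have l: "klinear s sW (\<lambda>z. F a (b * z))" by (intro lin)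
    show "sweedler D (\<lambda>a' b'. sW (\<epsilon> (x * b')) (F a (b * a'))) 1 = F a (b * eps_s x)"
      by (simp only: klinear_eps_s_apply[OF l])
  qed
  finally show ?thesis .
qed

lemma sweedler_eps_t:
  assumes vs: "vector_space sW" and F: "kbilinear s sW F"
  shows "sweedler D F (eps_t w) = sweedler D (\<lambda>a b. F (a * eps_t w) b) 1"
proof -
  note lin = kbilinearI ktrilinearI kbilinear_left_compose[OF F] kbilinear_right_compose[OF F]
    klinear_vs_intros[OF vs] klinear_intros
  have "sweedler D F (eps_t w) = sweedler D (\<lambda>p q. sW (\<epsilon> (p * w)) (sweedler D F q)) 1"
    by (rule klinear_eps_t_apply[OF klinear_sweedler[OF vs F]])
  also have "\<dots> = sweedler D (\<lambda>p q. sweedler D (\<lambda>u v. sW (\<epsilon> (p * w)) (F u v)) q) 1"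
    by (rule sweedler_cong) (simp add: sweedler_scale[OF vs])
  also have "\<dots> = sweedler D (\<lambda>r v. sweedler D (\<lambda>p u. sW (\<epsilon> (p * w)) (F u v)) r) 1"
    by (rule sweedler_coassoc[OF vs, symmetric]) (intro lin)
  also have "\<dots> = sweedler D (\<lambda>a b. sweedler D (\<lambda>a' b'. sW (\<epsilon> (a' * w)) (F (a * b') b)) 1) 1"
    by (rule sweedler_comult_one1[OF vs]) (intro lin)
  also have "\<dots> = sweedler D (\<lambda>a b. F (a * eps_t w) b) 1"
  proof (rule sweedler_cong)
    fix a b
    have l: "klinear s sW (\<lambda>z. F (a * z) b)" by (intro lin)
    show "sweedler D (\<lambda>a' b'. sW (\<epsilon> (a' * w)) (F (a * b') b)) 1 = F (a * eps_t w) b"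
      by (simp only: klinear_eps_t_apply[OF l])
  qed
  finally show ?thesis .
qed

lemma eps_s_mult: "eps_s (x * y) = sweedler D (\<lambda>a b. S a * eps_s x * b) y"
proof -
  have F: "kbilinear s s (\<lambda>p q. sweedler D (\<lambda>a b. S (p * a) * (q * b)) y)"
    by (intro kbilinearI klinear_intros)
  have "eps_s (x * y) = sweedler D (\<lambda>u v. S u * v) (eps_s x * y)"
    by (simp add: antipode_left eps_s_eps_s_mult)
  also have "\<dots> = sweedler D (\<lambda>p q. sweedler D (\<lambda>a b. S (p * a) * (q * b)) y) (eps_s x)"
    by (rule sweedler_comult_mult[OF H.vector_space_axioms]) (intro kbilinearI klinear_intros)
  also have "\<dots> = sweedler D (\<lambda>p q. sweedler D (\<lambda>a b. S (p * a) * (q * (eps_s x * b))) y) 1"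
    by (simp add: sweedler_eps_s[OF H.vector_space_axioms F] mult.assoc)
  also have "\<dots> = sweedler D (\<lambda>a b. sweedler D (\<lambda>p q. S (p * a) * q) 1 * (eps_s x * b)) y"
    by (subst sweedler_swap) (simp add: sweedler_mult_right mult.assoc)
  also have "\<dots> = sweedler D (\<lambda>a b. S a * eps_s x * b) y"
    by (rule sweedler_cong) (simp add: antipode_comult_one1[symmetric] mult.assoc)
  finally show ?thesis .
qed

lemma eps_s_eps_t_commute: "eps_s a * eps_t b = eps_t b * eps_s a"
proof -
  let ?G = "\<lambda>u v w. s (\<epsilon> (u * b)) (s (\<epsilon> (a * w)) v)"
  have G: "ktrilinear s s ?G"
    by (intro ktrilinearI klinear_intros)
  have "eps_s a * eps_t b = sweedler D (\<lambda>a0 b0. s (\<epsilon> (a * b0)) a0 * eps_t b) 1"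
    unfolding eps_s_def by (simp add: sweedler_mult_right)
  also have "\<dots> = sweedler D (\<lambda>a0 b0. sweedler D (\<lambda>a' b'. ?G a' (a0 * b') b0) 1) 1"
    unfolding eps_t_def by (rule sweedler_cong) (simp add: sweedler_mult_left scale_mult_scale_H mult.commute)
  also have "\<dots> = sweedler3 D ?G 1"
    by (rule sweedler_comult_one1[OF H.vector_space_axioms G, symmetric])
  also have "\<dots> = sweedler D (\<lambda>a0 b0. sweedler D (\<lambda>a' b'. ?G a0 (b0 * a') b') 1) 1"
    by (rule sweedler_comult_one2[OF H.vector_space_axioms G])
  also have "\<dots> = sweedler D (\<lambda>a0 b0. s (\<epsilon> (a0 * b)) b0 * eps_s a) 1"
    unfolding eps_s_def by (rule sweedler_cong) (simp add: sweedler_mult_left scale_mult_scale_H)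
  also have "\<dots> = eps_t b * eps_s a"
    unfolding eps_t_def by (simp add: sweedler_mult_right)
  finally show ?thesis .
qed

lemma sweedler_mult_eps_t_right:
  assumes vs: "vector_space sW" and F: "kbilinear s sW F"
  shows "sweedler D (\<lambda>a b. F (a * y) b) r
       = sweedler D (\<lambda>a b. sweedler D (\<lambda>c d. F (a * c) (b * eps_t d)) y) r"
proof -
  have bil: "kbilinear s sW (\<lambda>a b. F (a * y) b)" "kbilinear s sW (\<lambda>c d. F (a * c) (b * d))" for a b
    by (intro kbilinearI kbilinear_left_compose[OF F] kbilinear_right_compose[OF F] klinear_intros)+
  have "sweedler D (\<lambda>a b. F (a * y) b) r
      = sweedler D (\<lambda>a b. sweedler D (\<lambda>c d. F (a * (c * y)) (b * d)) 1) r"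
    using sweedler_comult_mult[OF vs bil(1), of r 1] by (simp add: mult.assoc)
  then show ?thesis by (simp only: sweedler_eps_t_right[OF vs bil(2), symmetric])
qed

lemma antipode_mult_eps_s: "S (x * y) = sweedler D (\<lambda>a c. sweedler D (\<lambda>b w. eps_s (a * b) * (S w * S c)) y) x"
proof -
  have kb: "kbilinear s s (\<lambda>u v. S (u * y) * v)" "kbilinear s s (\<lambda>a u. S a * u * S c)" for c
    by (intro kbilinearI klinear_intros)+
  have "S (x * y) = sweedler D (\<lambda>a b. S (a * x * y) * b) 1"
    using antipode_comult_one1[of "x * y"] by (simp only: mult.assoc)
  also have "\<dots> = sweedler D (\<lambda>a b. S (a * y) * eps_t b) x"
    by (rule sweedler_eps_t_right[OF H.vector_space_axioms kb(1), symmetric])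
  also have "\<dots> = sweedler D (\<lambda>a b. sweedler D (\<lambda>u c. S (a * y) * u * S c) b) x"
    by (rule sweedler_cong) (simp add: antipode_right[symmetric] sweedler_mult_left mult.assoc)
  also have "\<dots> = sweedler3 D (\<lambda>a u c. S (a * y) * u * S c) x"
    by (rule sweedler_coassoc[OF H.vector_space_axioms, symmetric]) (intro ktrilinearI klinear_intros)
  also have "\<dots> = sweedler D (\<lambda>r c. sweedler D (\<lambda>a u. sweedler D (\<lambda>b d. S (a * b) * (u * eps_t d) * S c) y) r) x"
    by (rule sweedler_cong) (simp only: sweedler_mult_eps_t_right[OF H.vector_space_axioms kb(2)])
  also have "\<dots> = sweedler D (\<lambda>r c. sweedler D (\<lambda>a u.
      sweedler D (\<lambda>b w. sweedler D (\<lambda>b' v. S (a * b') * (u * v) * S w * S c) b) y) r) x"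
  proof (rule sweedler_cong, rule sweedler_cong)
    fix r c a u
    have "sweedler D (\<lambda>b d. S (a * b) * (u * eps_t d) * S c) y
        = sweedler D (\<lambda>b d. sweedler D (\<lambda>v w. S (a * b) * (u * v) * S w * S c) d) y"
      by (rule sweedler_cong) (simp add: antipode_right[symmetric] sweedler_mult_left sweedler_mult_right mult.assoc)
    also have "\<dots> = sweedler D (\<lambda>b w. sweedler D (\<lambda>b' v. S (a * b') * (u * v) * S w * S c) b) y"
      by (rule sweedler_coassoc[OF H.vector_space_axioms, symmetric]) (intro ktrilinearI klinear_intros)
    finally show "sweedler D (\<lambda>b d. S (a * b) * (u * eps_t d) * S c) y
        = sweedler D (\<lambda>b w. sweedler D (\<lambda>b' v. S (a * b') * (u * v) * S w * S c) b) y" .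
  qed
  also have "\<dots> = sweedler D (\<lambda>r c. sweedler D (\<lambda>b w.
      sweedler D (\<lambda>a u. sweedler D (\<lambda>b' v. S (a * b') * (u * v) * S w * S c) b) r) y) x"
    by (rule sweedler_cong, rule sweedler_swap)
  also have "\<dots> = sweedler D (\<lambda>a c. sweedler D (\<lambda>b w. eps_s (a * b) * (S w * S c)) y) x"
  proof (rule sweedler_cong, rule sweedler_cong)
    fix r c b w
    have "eps_s (r * b) = sweedler D (\<lambda>a u. sweedler D (\<lambda>b' v. S (a * b') * (u * v)) b) r"
      unfolding antipode_left[symmetric]
      by (rule sweedler_comult_mult[OF H.vector_space_axioms]) (intro kbilinearI klinear_intros)
    then show "sweedler D (\<lambda>a u. sweedler D (\<lambda>b' v. S (a * b') * (u * v) * S w * S c) b) r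
      = eps_s (r * b) * (S w * S c)"
      by (simp add: sweedler_mult_right mult.assoc)
  qed
  finally show ?thesis .
qed

lemma antipode_mult: "S (x * y) = S y * S x"
proof -
  have "S (x * y) = sweedler D (\<lambda>a c. sweedler D (\<lambda>b w. eps_s (a * b) * (S w * S c)) y) x"
    by (rule antipode_mult_eps_s)
  also have "\<dots> = sweedler D (\<lambda>a c. sweedler D (\<lambda>b w. sweedler D (\<lambda>p q. S p * eps_s a * q * S w * S c) b) y) x"
    by (simp add: eps_s_mult sweedler_mult_right mult.assoc)
  also have "\<dots> = sweedler D (\<lambda>a c. sweedler D (\<lambda>p d. sweedler D (\<lambda>q w. S p * eps_s a * q * S w * S c) d) y) x"
    by (rule sweedler_cong, rule sweedler_coassoc[OF H.vector_space_axioms]) (intro ktrilinearI klinear_intros)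
  also have "\<dots> = sweedler D (\<lambda>a c. sweedler D (\<lambda>p d. S p * (eps_s a * eps_t d) * S c) y) x"
    by (simp add: antipode_right[symmetric] sweedler_mult_left sweedler_mult_right mult.assoc)
  also have "\<dots> = sweedler D (\<lambda>a c. sweedler D (\<lambda>p d. S p * eps_t d * (eps_s a * S c)) y) x"
    by (simp add: eps_s_eps_t_commute mult.assoc)
  also have "\<dots> = sweedler D (\<lambda>a c. sweedler D (\<lambda>p d. S p * eps_t d) y * (eps_s a * S c)) x"
    by (rule sweedler_cong) (rule sweedler_mult_right[symmetric])
  also have "\<dots> = S y * S x"
    by (simp add: antipode_eps_t[symmetric] antipode_eps_s[of x] sweedler_mult_left)
  finally show ?thesis .
qed

lemma sweedler_antipode_nested:
  assumes vs: "vector_space sW" and F: "kbilinear s sW F"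
  shows "sweedler D (\<lambda>y z. sweedler D (\<lambda>z1 z2. sweedler D (\<lambda>P Q. F (P * S z2) (Q * S z1)) y) z) w
       = sweedler D (\<lambda>p q. F (p * eps_t w) q) 1"
proof -
  note lin = kbilinearI ktrilinearI kbilinear_left_compose[OF F] kbilinear_right_compose[OF F]
    klinear_vs_intros[OF vs] klinear_intros
  have "sweedler D (\<lambda>y z. sweedler D (\<lambda>z1 z2. sweedler D (\<lambda>P Q. F (P * S z2) (Q * S z1)) y) z) w
      = sweedler D (\<lambda>P t. sweedler D (\<lambda>Q z. sweedler D (\<lambda>z1 z2. F (P * S z2) (Q * S z1)) z) t) w"
    unfolding sweedler_swap[of D "\<lambda>z1 z2 P Q. F (P * S z2) (Q * S z1)"]
    by (rule sweedler_coassoc[OF vs]) (intro lin)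
  also have "\<dots> = sweedler D (\<lambda>P t. sweedler D (\<lambda>m z2. sweedler D (\<lambda>Q z1. F (P * S z2) (Q * S z1)) m) t) w"
    by (rule sweedler_cong, rule sweedler_coassoc[OF vs, symmetric]) (intro lin)
  also have "\<dots> = sweedler3 D (\<lambda>P m z2. F (P * S z2) (eps_t m)) w"
    by (simp add: antipode_right[symmetric] sweedler_klinear[OF kbilinear_right[OF F]],
        rule sweedler_coassoc[OF vs, symmetric], intro lin)
  also have "\<dots> = sweedler D (\<lambda>n z2. sweedler D (\<lambda>p q. F (p * n * S z2) q) 1) w"
  proof (rule sweedler_cong)
    fix n z2
    have "kbilinear s sW (\<lambda>A B. F (A * S z2) B)" by (intro lin)
    from sweedler_eps_t_right[OF vs this, of n]
    show "sweedler D (\<lambda>P m. F (P * S z2) (eps_t m)) n = sweedler D (\<lambda>p q. F (p * n * S z2) q) 1"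
      by simp
  qed
  also have "\<dots> = sweedler D (\<lambda>p q. sweedler D (\<lambda>n z2. F (p * (n * S z2)) q) w) 1"
    by (subst sweedler_swap) (simp add: mult.assoc)
  also have "\<dots> = sweedler D (\<lambda>p q. F (p * eps_t w) q) 1"
  proof (rule sweedler_cong)
    fix p q
    have l: "klinear s sW (\<lambda>z. F (p * z) q)" by (intro lin)
    show "sweedler D (\<lambda>n z2. F (p * (n * S z2)) q) w = F (p * eps_t w) q"
      by (simp add: antipode_right[symmetric] sweedler_klinear[OF l])
  qed
  finally show ?thesis .
qed

lemma sweedler_mult_eps_t:
  assumes vs: "vector_space sW" and F: "kbilinear s sW F"
  shows "sweedler D F (y * eps_t t) = sweedler D (\<lambda>a b. sweedler D (\<lambda>p q. F (a * p * eps_t t) (b * q)) 1) y"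
proof -
  have bil: "kbilinear s sW (\<lambda>c d. F (a * c) (b * d))" for a b
    by (intro kbilinearI kbilinear_left_compose[OF F] kbilinear_right_compose[OF F] klinear_intros)
  have "sweedler D F (y * eps_t t) = sweedler D (\<lambda>a b. sweedler D (\<lambda>c d. F (a * c) (b * d)) (eps_t t)) y"
    by (rule sweedler_comult_mult[OF vs F])
  then show ?thesis by (simp add: sweedler_eps_t[OF vs bil] mult.assoc)
qed

lemma sweedler_eps_s_expand:
  assumes vs: "vector_space sW" and F: "kbilinear s sW F"
  shows "sweedler D F (eps_s a)
       = sweedler D (\<lambda>c d. sweedler D (\<lambda>P Q. sweedler D (\<lambda>P' Q'. F (P * P') (Q * Q')) d) (S c)) a"
proof -
  have "sweedler D F (eps_s a) = sweedler D (\<lambda>c d. sweedler D F (S c * d)) a"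
    by (simp add: antipode_left[symmetric] sweedler_klinear[OF klinear_sweedler[OF vs F]])
  then show ?thesis by (simp add: sweedler_comult_mult[OF vs F])
qed

text \<open>Anti-comultiplicativity of \<open>S\<close> is proved along
  \<open>S x\<^sub>2 \<otimes> S x\<^sub>1 = \<Delta>(1)(S x\<^sub>2 \<otimes> S x\<^sub>1) = \<Delta>(\<epsilon>\<^sub>s(x\<^sub>1))(S x\<^sub>3 \<otimes> S x\<^sub>2) = \<Delta>(S x)\<close>.\<close>

lemma sweedler_antipode_unit:
  assumes vs: "vector_space sW" and F: "kbilinear s sW F"
  shows "sweedler D (\<lambda>u v. F (S v) (S u)) x = sweedler D (\<lambda>u v. sweedler D (\<lambda>p q. F (p * S v) (q * S u)) 1) x"
proof -
  have bil: "kbilinear s sW (\<lambda>u v. F (S v) (S u))" "kbilinear s sW (\<lambda>p q. F (p * S v) (q * S u))" for u v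
    by (intro kbilinearI kbilinear_left_compose[OF F] kbilinear_right_compose[OF F] klinear_intros)+
  have "sweedler D (\<lambda>u v. F (S v) (S u)) x = sweedler D (\<lambda>u v. sweedler D (\<lambda>p q. F (S q * S v) (S p * S u)) 1) x"
    using sweedler_comult_mult[OF vs bil(1), of x 1] by (simp add: antipode_mult)
  also have "\<dots> = sweedler D (\<lambda>u v. sweedler D (\<lambda>p q. F (p * S v) (q * S u)) 1) x"
    by (simp add: sweedler_one_antipode[OF vs bil(2)])
  finally show ?thesis .
qed

lemma sweedler_unit_antipode:
  assumes vs: "vector_space sW" and F: "kbilinear s sW F"
  shows "sweedler D (\<lambda>u v. sweedler D (\<lambda>p q. F (p * S v) (q * S u)) 1) x
       = sweedler D (\<lambda>a w. sweedler D (\<lambda>b v. sweedler D (\<lambda>P Q. F (P * S v) (Q * S b)) (eps_s a)) w) x"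
proof -
  note lin = kbilinearI ktrilinearI kbilinear_left_compose[OF F] kbilinear_right_compose[OF F]
    klinear_vs_intros[OF vs] klinear_intros
  have "sweedler D (\<lambda>p q. F (p * z) (q * S u)) 1
      = sweedler D (\<lambda>a b. sweedler D (\<lambda>P Q. F (P * z) (Q * S b)) (eps_s a)) u" for z u
  proof -
    have bil: "kbilinear s sW (\<lambda>P Q. F (P * z) (Q * S b))" for b by (intro lin)
    have "sweedler D (\<lambda>p q. F (p * z) (q * S u)) 1
        = sweedler D (\<lambda>p q. sweedler D (\<lambda>a b. F (p * z) (q * eps_s a * S b)) u) 1"
    proof (rule sweedler_cong)
      fix p q
      have l: "klinear s sW (\<lambda>w. F (p * z) (q * w))" by (intro lin)
      show "F (p * z) (q * S u) = sweedler D (\<lambda>a b. F (p * z) (q * eps_s a * S b)) u"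
        by (subst antipode_eps_s[of u]) (simp add: sweedler_klinear[OF l] mult.assoc)
    qed
    also have "\<dots> = sweedler D (\<lambda>a b. sweedler D (\<lambda>P Q. F (P * z) (Q * S b)) (eps_s a)) u"
      by (subst sweedler_swap) (simp add: sweedler_eps_s[OF vs bil] mult.assoc)
    finally show ?thesis .
  qed
  then show ?thesis
    by (simp add: sweedler_coassoc[OF vs, of "\<lambda>a b v. sweedler D (\<lambda>P Q. F (P * S v) (Q * S b)) (eps_s a)"]
        lin)
qed

lemma sweedler_eps_s_antipode:
  assumes vs: "vector_space sW" and F: "kbilinear s sW F"
  shows "sweedler D (\<lambda>a w. sweedler D (\<lambda>b v. sweedler D (\<lambda>P Q. F (P * S v) (Q * S b)) (eps_s a)) w) x
       = sweedler D F (S x)"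
proof -
  note lin = kbilinearI ktrilinearI kbilinear_left_compose[OF F] kbilinear_right_compose[OF F]
    klinear_vs_intros[OF vs] klinear_intros
  let ?G = "\<lambda>P Q d w. sweedler D (\<lambda>b v. sweedler D (\<lambda>P' Q'. F (P * (P' * S v)) (Q * (Q' * S b))) d) w"
  have "sweedler D (\<lambda>a w. sweedler D (\<lambda>b v. sweedler D (\<lambda>P Q. F (P * S v) (Q * S b)) (eps_s a)) w) x
      = sweedler D (\<lambda>a w. sweedler D (\<lambda>c d. sweedler D (\<lambda>P Q. ?G P Q d w) (S c)) a) x"
  proof (rule sweedler_cong)
    fix a w
    have "kbilinear s sW (\<lambda>P Q. F (P * S v) (Q * S b))" for b v by (intro lin)
    then show "sweedler D (\<lambda>b v. sweedler D (\<lambda>P Q. F (P * S v) (Q * S b)) (eps_s a)) w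
        = sweedler D (\<lambda>c d. sweedler D (\<lambda>P Q. ?G P Q d w) (S c)) a"
      by (simp add: sweedler_eps_s_expand[OF vs] mult.assoc sweedler_swap[of D _ w])
  qed
  also have "\<dots> = sweedler D (\<lambda>c t. sweedler D (\<lambda>d w. sweedler D (\<lambda>P Q. ?G P Q d w) (S c)) t) x"
    by (rule sweedler_coassoc[OF vs]) (intro lin)
  also have "\<dots> = sweedler D (\<lambda>c t. sweedler D (\<lambda>P Q. sweedler D (\<lambda>p q. F (P * (p * eps_t t)) (Q * q)) 1) (S c)) x"
  proof (rule sweedler_cong)
    fix c t
    have bil: "kbilinear s sW (\<lambda>A B. F (P * A) (Q * B))" for P Q by (intro lin)
    show "sweedler D (\<lambda>d w. sweedler D (\<lambda>P Q. ?G P Q d w) (S c)) t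
        = sweedler D (\<lambda>P Q. sweedler D (\<lambda>p q. F (P * (p * eps_t t)) (Q * q)) 1) (S c)"
      by (rule trans[OF sweedler_swap], rule sweedler_cong, rule sweedler_antipode_nested[OF vs bil])
  qed
  also have "\<dots> = sweedler D F (sweedler D (\<lambda>c t. S c * eps_t t) x)"
    by (simp add: sweedler_klinear[OF klinear_sweedler[OF vs F]] sweedler_mult_eps_t[OF vs F] mult.assoc)
  finally show ?thesis by (simp add: antipode_eps_t[symmetric])
qed

lemma sweedler_antipode:
  assumes "vector_space sW" "kbilinear s sW F"
  shows "sweedler D F (S x) = sweedler D (\<lambda>a b. F (S b) (S a)) x"
  using sweedler_antipode_unit[OF assms] sweedler_unit_antipode[OF assms] sweedler_eps_s_antipode[OF assms]
  by simp

lemma sweedler3_antipode: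
  assumes vs: "vector_space sW" and G: "ktrilinear s sW G"
  shows "sweedler3 D G (S y) = sweedler3 D (\<lambda>x y z. G (S z) (S y) (S x)) y"
proof -
  note lin = kbilinearI ktrilinearI ktrilinear1[OF G] ktrilinear2[OF G] ktrilinear3[OF G]
    klinear_compose[OF _ ktrilinear1[OF G]] klinear_compose[OF _ ktrilinear2[OF G]]
    klinear_compose[OF _ ktrilinear3[OF G]] klinear_vs_intros[OF vs] klinear_intros
  have "sweedler3 D G (S y) = sweedler D (\<lambda>a b. sweedler D (\<lambda>x z. G x z (S a)) (S b)) y"
    by (rule sweedler_antipode[OF vs]) (intro lin)
  also have "\<dots> = sweedler D (\<lambda>a b. sweedler D (\<lambda>x z. G (S z) (S x) (S a)) b) y"
  proof (rule sweedler_cong)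
    fix a b
    have "kbilinear s sW (\<lambda>x z. G x z (S a))" by (intro lin)
    then show "sweedler D (\<lambda>x z. G x z (S a)) (S b) = sweedler D (\<lambda>x z. G (S z) (S x) (S a)) b"
      by (rule sweedler_antipode[OF vs])
  qed
  also have "\<dots> = sweedler3 D (\<lambda>x y z. G (S z) (S y) (S x)) y"
    by (rule sweedler_coassoc[OF vs, symmetric]) (intro lin)
  finally show ?thesis .
qed

end

section \<open>Partial representations\<close>

locale partial_representation = weak_hopf s D \<epsilon> S
  for s :: "'k::field \<Rightarrow> 'h::ring_1 \<Rightarrow> 'h" and D \<epsilon> S +
  fixes sA :: "'k \<Rightarrow> 'a::ring_1 \<Rightarrow> 'a" and \<pi> :: "'h \<Rightarrow> 'a"
  assumes k_algebra_A: "k_algebra sA"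
    and linear_pi: "Vector_Spaces.linear s sA \<pi>"
    and PR: "PR_conditions D S \<pi>"
begin

sublocale A: vector_space sA
  using k_algebra_A by (simp add: k_algebra_def)

lemma klinear_pi: "klinear s sA \<pi>"
  using linear_pi by (rule linear_imp_klinear)

lemmas klinear_A_intros = kbilinearI ktrilinearI klinear_compose[OF _ klinear_pi]
  klinear_mult_left[OF k_algebra_A] klinear_mult_right[OF k_algebra_A] klinear_intros

lemma PR1: "\<pi> 1 = 1"
  and PR2: "sweedler D (\<lambda>x y. \<pi> h * \<pi> x * \<pi> (S y)) k = sweedler D (\<lambda>x y. \<pi> (h * x) * \<pi> (S y)) k"
  and PR3: "sweedler D (\<lambda>x y. \<pi> h * \<pi> (S x) * \<pi> y) k = sweedler D (\<lambda>x y. \<pi> (h * S x) * \<pi> y) k"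
  and PR4: "sweedler D (\<lambda>x y. \<pi> x * \<pi> (S y) * \<pi> k) h = sweedler D (\<lambda>x y. \<pi> x * \<pi> (S y * k)) h"
  and PR5: "sweedler D (\<lambda>x y. \<pi> (S x) * \<pi> y * \<pi> k) h = sweedler D (\<lambda>x y. \<pi> (S x) * \<pi> (y * k)) h"
  using PR unfolding PR_conditions_def sweedler_def by blast+

text \<open>Conditions (2) and (3) of the theorem say \<open>unit_pi_S = 1\<close> and \<open>unit_S_pi = 1\<close>.\<close>

definition unit_pi_S :: 'a where
  "unit_pi_S = sweedler D (\<lambda>a b. \<pi> a * \<pi> (S b)) 1"

definition unit_S_pi :: 'a where
  "unit_S_pi = sweedler D (\<lambda>a b. \<pi> (S a) * \<pi> b) 1"

lemma triple_pi_S_pi_right: "sweedler3 D (\<lambda>x y z. \<pi> x * \<pi> (S y) * \<pi> z) h = \<pi> h * unit_pi_S"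
proof -
  have "sweedler3 D (\<lambda>x y z. \<pi> x * \<pi> (S y) * \<pi> z) h = sweedler3 D (\<lambda>x y z. \<pi> x * \<pi> (S y * z)) h"
    by (rule sweedler_cong) (rule PR4)
  also have "\<dots> = sweedler D (\<lambda>x b. sweedler D (\<lambda>y z. \<pi> x * \<pi> (S y * z)) b) h"
    by (rule sweedler_coassoc[OF A.vector_space_axioms]) (intro klinear_A_intros)
  also have "\<dots> = sweedler D (\<lambda>x b. \<pi> x * \<pi> (eps_s b)) h"
    by (rule sweedler_cong) (simp add: antipode_left[symmetric] sweedler_klinear[OF klinear_pi] sweedler_mult_left)
  also have "\<dots> = sweedler D (\<lambda>p q. \<pi> (h * p) * \<pi> (S q)) 1"
    by (rule sweedler_eps_s_right[OF A.vector_space_axioms]) (intro klinear_A_intros)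
  also have "\<dots> = \<pi> h * unit_pi_S"
    by (simp add: PR2[symmetric] unit_pi_S_def sweedler_mult_left mult.assoc)
  finally show ?thesis .
qed

lemma triple_pi_S_pi_left: "sweedler3 D (\<lambda>x y z. \<pi> x * \<pi> (S y) * \<pi> z) h = unit_S_pi * \<pi> h"
proof -
  have "sweedler3 D (\<lambda>x y z. \<pi> x * \<pi> (S y) * \<pi> z) h
      = sweedler D (\<lambda>x b. sweedler D (\<lambda>y z. \<pi> x * \<pi> (S y) * \<pi> z) b) h"
    by (rule sweedler_coassoc[OF A.vector_space_axioms]) (intro klinear_A_intros)
  also have "\<dots> = sweedler D (\<lambda>x b. sweedler D (\<lambda>y z. \<pi> (x * S y) * \<pi> z) b) h"
    by (rule sweedler_cong) (rule PR3)
  also have "\<dots> = sweedler3 D (\<lambda>x y z. \<pi> (x * S y) * \<pi> z) h"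
    by (rule sweedler_coassoc[OF A.vector_space_axioms, symmetric]) (intro klinear_A_intros)
  also have "\<dots> = sweedler D (\<lambda>a z. \<pi> (eps_t a) * \<pi> z) h"
    by (rule sweedler_cong) (simp add: antipode_right[symmetric] sweedler_klinear[OF klinear_pi] sweedler_mult_right)
  also have "\<dots> = sweedler D (\<lambda>p q. \<pi> (S p) * \<pi> (q * h)) 1"
    by (rule sweedler_eps_t_left[OF A.vector_space_axioms]) (intro klinear_A_intros)
  also have "\<dots> = unit_S_pi * \<pi> h"
    by (simp add: PR5[symmetric] unit_S_pi_def sweedler_mult_right)
  finally show ?thesis .
qed

lemma triple_S_pi_S_left: "sweedler3 D (\<lambda>x y z. \<pi> (S x) * \<pi> y * \<pi> (S z)) h = unit_pi_S * \<pi> (S h)"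
proof -
  have "sweedler3 D (\<lambda>x y z. \<pi> (S x) * \<pi> y * \<pi> (S z)) h
      = sweedler D (\<lambda>x b. sweedler D (\<lambda>y z. \<pi> (S x) * \<pi> y * \<pi> (S z)) b) h"
    by (rule sweedler_coassoc[OF A.vector_space_axioms]) (intro klinear_A_intros)
  also have "\<dots> = sweedler D (\<lambda>x b. sweedler D (\<lambda>y z. \<pi> (S x * y) * \<pi> (S z)) b) h"
    by (rule sweedler_cong) (rule PR2)
  also have "\<dots> = sweedler3 D (\<lambda>x y z. \<pi> (S x * y) * \<pi> (S z)) h"
    by (rule sweedler_coassoc[OF A.vector_space_axioms, symmetric]) (intro klinear_A_intros)
  also have "\<dots> = sweedler D (\<lambda>a z. \<pi> (eps_s a) * \<pi> (S z)) h"
    by (rule sweedler_cong) (simp add: antipode_left[symmetric] sweedler_klinear[OF klinear_pi] sweedler_mult_right)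
  also have "\<dots> = sweedler D (\<lambda>p q. \<pi> p * \<pi> (S (h * q))) 1"
    by (rule sweedler_eps_s_left[OF A.vector_space_axioms]) (intro klinear_A_intros)
  also have "\<dots> = unit_pi_S * \<pi> (S h)"
    by (simp add: antipode_mult PR4[symmetric] unit_pi_S_def sweedler_mult_right)
  finally show ?thesis .
qed

lemma inv_antipode_triple:
  assumes "bij S"
  shows "sweedler3 D (\<lambda>x y z. \<pi> z * \<pi> (inv S y) * \<pi> x) (S h)
       = sweedler3 D (\<lambda>x y z. \<pi> (S x) * \<pi> y * \<pi> (S z)) h"
proof -
  have "ktrilinear s sA (\<lambda>x y z. \<pi> z * \<pi> (inv S y) * \<pi> x)"
    by (intro klinear_A_intros klinear_compose[OF _ klinear_inv[OF klinear_antipode assms]])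
  then show ?thesis
    using sweedler3_antipode[OF A.vector_space_axioms] assms by (simp add: bij_is_inj)
qed

lemma inv_antipode_unit_left:
  assumes "bij S"
  shows "sweedler D (\<lambda>a b. \<pi> (inv S b) * \<pi> a) 1 = unit_pi_S"
proof -
  have "kbilinear s sA (\<lambda>a b. \<pi> (inv S b) * \<pi> a)"
    by (intro klinear_A_intros klinear_compose[OF _ klinear_inv[OF klinear_antipode assms]])
  then show ?thesis
    using sweedler_one_antipode[OF A.vector_space_axioms] assms by (simp add: bij_is_inj unit_pi_S_def)
qed

lemma inv_antipode_unit_right:
  assumes "bij S"
  shows "sweedler D (\<lambda>a b. \<pi> b * \<pi> (inv S a)) 1 = unit_S_pi"
proof -
  have "kbilinear s sA (\<lambda>a b. \<pi> b * \<pi> (inv S a))"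
    by (intro klinear_A_intros klinear_compose[OF _ klinear_inv[OF klinear_antipode assms]])
  then show ?thesis
    using sweedler_one_antipode[OF A.vector_space_axioms] assms by (simp add: bij_is_inj unit_S_pi_def)
qed

end

lemma all_eq_mult_right_iff: "u 1 = 1 \<Longrightarrow> (\<forall>h. u h = u h * c) \<longleftrightarrow> c = (1::'a::monoid_mult)"
  by (metis mult_1 mult_1_right)

lemma all_eq_mult_left_iff: "u 1 = 1 \<Longrightarrow> (\<forall>h. u h = c * u h) \<longleftrightarrow> c = (1::'a::monoid_mult)"
  by (metis mult_1 mult_1_right)

lemma all_surj_iff: "surj f \<Longrightarrow> (\<forall>y. P y) \<longleftrightarrow> (\<forall>x. P (f x))"
  by (metis surjD)

theorem proposition3p2:
  fixes s :: "'k::field \<Rightarrow> 'h::ring_1 \<Rightarrow> 'h"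
    and D :: "'h \<Rightarrow> ('h \<times> 'h) list"
    and \<epsilon> :: "'h \<Rightarrow> 'k"
    and S :: "'h \<Rightarrow> 'h"
    and sA :: "'k \<Rightarrow> 'a::ring_1 \<Rightarrow> 'a"
    and \<pi> :: "'h \<Rightarrow> 'a"
  assumes wha: "weak_hopf_algebra s D \<epsilon> S"
    and alg: "k_algebra sA"
    and lin: "Vector_Spaces.linear s sA \<pi>"
    and pr: "PR_conditions D S \<pi>"
  defines "P1 \<equiv> (\<forall>h. \<pi> h = sum_list (map (\<lambda>(x, y, z). \<pi> x * \<pi> (S y) * \<pi> z) (comult2 D h)))"
    and "P2 \<equiv> (sum_list (map (\<lambda>(a, b). \<pi> a * \<pi> (S b)) (D 1)) = 1)"
    and "P3 \<equiv> (sum_list (map (\<lambda>(a, b). \<pi> (S a) * \<pi> b) (D 1)) = 1)"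
    and "P4 \<equiv> (\<forall>h. \<pi> (S h) = sum_list (map (\<lambda>(x, y, z). \<pi> (S x) * \<pi> y * \<pi> (S z)) (comult2 D h)))"
    and "P5 \<equiv> (\<forall>h. \<pi> h = sum_list (map (\<lambda>(x, y, z). \<pi> z * \<pi> (inv S y) * \<pi> x) (comult2 D h)))"
    and "P6 \<equiv> (sum_list (map (\<lambda>(a, b). \<pi> (inv S b) * \<pi> a) (D 1)) = 1)"
    and "P7 \<equiv> (sum_list (map (\<lambda>(a, b). \<pi> b * \<pi> (inv S a)) (D 1)) = 1)"
  shows "(P1 \<longleftrightarrow> P2) \<and> (P1 \<longleftrightarrow> P3) \<and> (P1 \<longleftrightarrow> P4) \<and>
         (bij S \<longrightarrow> (P1 \<longleftrightarrow> P5) \<and> (P1 \<longleftrightarrow> P6) \<and> (P1 \<longleftrightarrow> P7))"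
proof -
  interpret partial_representation s D \<epsilon> S sA \<pi>
    using assms by (intro partial_representation.intro partial_representation_axioms.intro weak_hopf.intro)
  have P1_right: "P1 \<longleftrightarrow> unit_pi_S = 1"
    unfolding P1_def sum_comult2 triple_pi_S_pi_right by (simp add: all_eq_mult_right_iff PR1)
  have P1_left: "P1 \<longleftrightarrow> unit_S_pi = 1"
    unfolding P1_def sum_comult2 triple_pi_S_pi_left by (simp add: all_eq_mult_left_iff PR1)
  have "P2 \<longleftrightarrow> unit_pi_S = 1" and "P3 \<longleftrightarrow> unit_S_pi = 1"
    by (simp_all add: P2_def P3_def unit_pi_S_def unit_S_pi_def sweedler_def)
  moreover have "P4 \<longleftrightarrow> unit_pi_S = 1"
    unfolding P4_def sum_comult2 triple_S_pi_S_left
    using all_eq_mult_left_iff[of "\<lambda>h. \<pi> (S h)"] by (simp add: PR1 antipode_one)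
  moreover have "P5 \<longleftrightarrow> P4" "P6 \<longleftrightarrow> unit_pi_S = 1" "P7 \<longleftrightarrow> unit_S_pi = 1" if "bij S"
  proof -
    have "P5 \<longleftrightarrow> (\<forall>h. \<pi> (S h) = sweedler3 D (\<lambda>x y z. \<pi> z * \<pi> (inv S y) * \<pi> x) (S h))"
      unfolding P5_def sum_comult2 by (rule all_surj_iff[OF bij_is_surj[OF \<open>bij S\<close>]])
    then show "P5 \<longleftrightarrow> P4"
      unfolding P4_def sum_comult2 inv_antipode_triple[OF \<open>bij S\<close>] .
    show "P6 \<longleftrightarrow> unit_pi_S = 1" "P7 \<longleftrightarrow> unit_S_pi = 1"
      using inv_antipode_unit_left[OF \<open>bij S\<close>] inv_antipode_unit_right[OF \<open>bij S\<close>]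
      by (simp_all add: P6_def P7_def sweedler_def)
  qed
  ultimately show ?thesis using P1_right P1_left by blast
qed

end
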